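(* Let $a\in(0,1/2)$ and $\lambda>\frac{2}{1-2a}$. Then $$\liminf_{N\to\infty}\frac1N\log T_{\rm rel}\ge E(a,\lambda),$$ where $E(a,\lambda)=\textsc{f}(\lambda)-a\log\big(\frac{1+d_\lambda}{1-d_\lambda}\big)+q(2a)$ if $\lambda\in(\frac{2}{1-2a},\lambda_c(a)]$ and $E(a,\lambda)=q(2a)$ if $\lambda\ge\lambda_c(a)$.
   Context: $\langle s\rangle$ is the smallest even integer $\ge s$. For $N$ even, $\mathcal S^a_N$ is the set of $\eta=(\eta_x)_{x\in\{0,\dots,N\}}$ with values in $\mathbb Z_{\ge0}$, $\eta_0=\eta_N=\langle aN\rangle$, $|\eta_{x+1}-\eta_x|=1$; $H(\eta)=\#\{x:\eta_x=0\}$; $\pi^{\lambda,a}_N(\eta)\propto\lambda^{H(\eta)}$. For $x\in\{1,\dots,N-1\}$, $\eta^x$ replaces $\eta_x$ by $\eta_{x+1}+\eta_{x-1}-\eta_x$. The polymer dynamics is the continuous-time Markov chain on $\mathcal S^a_N$ with rates $r^\lambda(\eta,\eta^x)=\frac12$ if $\eta_x>0$ and $\eta^x_x>0$; $\frac{\lambda}{\lambda+1}$ if $\eta_{x\pm1}=1,\eta_x=2$; $\frac1{\lambda+1}$ if $\eta_x=0$; $0$ if $\eta_{x\pm1}=0$; no other jumps; it is reversible w.r.t. $\pi^{\lambda,a}_N$. $T_{\rm rel}$ is the inverse of its spectral gap. $\textsc{f}(\lambda)=\log\frac{\lambda}{2\sqrt{\lambda-1}}$ for $\lambda>2$ ($0$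 otherwise); $d_\lambda=1-2/\lambda$; $q(d)=\frac12[(1+d)\log(1+d)+(1-d)\log(1-d)]$; $\lambda_c(a)$ is the unique solution of $\textsc{f}(\lambda)=a\log(\lambda-1)$. *)

theory Defs
  imports "HOL-Analysis.Analysis"
begin

type_synonym path = "nat \<Rightarrow> int"

definition even_ceil :: "real \<Rightarrow> int" where
  "even_ceil s = 2 * \<lceil>s / 2\<rceil>"

text \<open>State space S^a_N; paths are extended by 0 beyond N so the set is finite.\<close>
definition states :: "real \<Rightarrow> nat \<Rightarrow> path set" where
  "states a N = {\<eta>. (\<forall>x\<le>N. \<eta> x \<ge> 0) \<and> (\<forall>x>N. \<eta> x = 0)
      \<and> \<eta> 0 = even_ceil (a * real N) \<and> \<eta> N = even_ceil (a * real N)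
      \<and> (\<forall>x<N. \<bar>\<eta> (Suc x) - \<eta> x\<bar> = 1)}"

definition H :: "nat \<Rightarrow> path \<Rightarrow> nat" where
  "H N \<eta> = card {x. x \<le> N \<and> \<eta> x = 0}"

definition Zpart :: "real \<Rightarrow> real \<Rightarrow> nat \<Rightarrow> real" where
  "Zpart lam a N = (\<Sum>\<eta>\<in>states a N. lam ^ H N \<eta>)"

definition pi_meas :: "real \<Rightarrow> real \<Rightarrow> nat \<Rightarrow> path \<Rightarrow> real" where
  "pi_meas lam a N \<eta> = lam ^ H N \<eta> / Zpart lam a N"

definition flip :: "path \<Rightarrow> nat \<Rightarrow> path" where
  "flip \<eta> x = \<eta>(x := \<eta> (Suc x) + \<eta> (x - 1) - \<eta> x)"

definition rate :: "real \<Rightarrow> path \<Rightarrow> nat \<Rightarrow> real" where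
  "rate lam \<eta> x =
     (if \<eta> x > 0 \<and> flip \<eta> x x > 0 then 1/2
      else if \<eta> (x - 1) = 1 \<and> \<eta> (Suc x) = 1 \<and> \<eta> x = 2 then lam / (lam + 1)
      else if \<eta> x = 0 then 1 / (lam + 1)
      else 0)"

definition dirichlet :: "real \<Rightarrow> real \<Rightarrow> nat \<Rightarrow> (path \<Rightarrow> real) \<Rightarrow> real" where
  "dirichlet lam a N f = (1/2) * (\<Sum>\<eta>\<in>states a N. pi_meas lam a N \<eta> *
      (\<Sum>x\<in>{1..N-1}. rate lam \<eta> x * (f (flip \<eta> x) - f \<eta>)^2))"

definition variance :: "real \<Rightarrow> real \<Rightarrow> nat \<Rightarrow> (path \<Rightarrow> real) \<Rightarrow> real" where
  "variance lam a N f = (\<Sum>\<eta>\<in>states a N. pi_meas lam a N \<eta> * (f \<eta>)^2)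
      - (\<Sum>\<eta>\<in>states a N. pi_meas lam a N \<eta> * f \<eta>)^2"

definition spectral_gap :: "real \<Rightarrow> real \<Rightarrow> nat \<Rightarrow> real" where
  "spectral_gap lam a N = Inf {dirichlet lam a N f / variance lam a N f | f. variance lam a N f \<noteq> 0}"

definition Trel :: "real \<Rightarrow> real \<Rightarrow> nat \<Rightarrow> real" where
  "Trel lam a N = 1 / spectral_gap lam a N"

definition Ffree :: "real \<Rightarrow> real" where
  "Ffree lam = (if lam > 2 then ln (lam / (2 * sqrt (lam - 1))) else 0)"

definition d_lam :: "real \<Rightarrow> real" where
  "d_lam lam = 1 - 2 / lam"

definition q :: "real \<Rightarrow> real" where
  "q d = ((1 + d) * ln (1 + d) + (1 - d) * ln (1 - d)) / 2"

definition lambda_c :: "real \<Rightarrow> real" where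
  "lambda_c a = (THE lam. lam > 2 \<and> Ffree lam = a * ln (lam - 1))"

definition E_rate :: "real \<Rightarrow> real \<Rightarrow> real" where
  "E_rate a lam = (if lam \<le> lambda_c a
      then Ffree lam - a * ln ((1 + d_lam lam) / (1 - d_lam lam)) + q (2 * a)
      else q (2 * a))"

end

theory Submission
  imports Defs
begin

text \<open>
  Test the spectral gap with the indicator of touching the wall. Its variance is
  \<open>Z\<^sub>A Z\<^sub>B / Z\<^sup>2\<close> (weights of the touching and of the avoiding paths, \<open>Z = Z\<^sub>A + Z\<^sub>B\<close>), while its Dirichlet form
  only sees paths that come within distance 1 of the wall; hence
  \<open>T\<^sub>rel \<ge> min Z\<^sub>A Z\<^sub>B / (2 N lam M)\<close>, with \<open>M\<close> the number of such paths.

  Gluing two half-length paths at their common midpoint value and applying Cauchy-Schwarz over that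
  value reduces \<open>Z\<^sub>A\<close> and \<open>Z\<^sub>B\<close> to paths of length \<open>m = N/2\<close> from height \<open>h = even_ceil (a N)\<close> with free endpoint. For these,
  \<open>j \<mapsto> r ^ j\<close> with \<open>r = 1 / sqrt (lam - 1)\<close> is an eigenfunction of the pinned transfer
  operator, so the touching weight is about \<open>(r + 1/r) ^ m * r ^ h\<close>; the avoiding paths are a
  negligible correction because, for \<open>lam > 2/(1 - 2a)\<close>, a tilt slightly above \<open>r\<close> has a smaller
  growth rate. Avoiding paths number at least \<open>2 ^ m / (h + m)\<close>, and the exponential martingale with
  \<open>\<sigma> = sqrt ((1 + 2a) / (1 - 2a))\<close> bounds \<open>M\<close> by \<open>(N + 1) (\<sigma> + 1/\<sigma>) ^ N / \<sigma> ^ (2 (h - 1))\<close>.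
  Taking logarithms yields the rate \<open>min (Ffree lam - a ln (lam - 1)) 0 + q (2a)\<close>, which dominates
  \<open>E_rate a lam\<close>. A crude Poincare inequality along peak-flipping paths makes the spectral gap
  positive, so that \<open>Trel\<close> really is its inverse.
\<close>

definition paths :: "int \<Rightarrow> nat \<Rightarrow> path set" where
  "paths h k = {\<eta>. \<eta> 0 = h \<and> (\<forall>x\<le>k. \<eta> x \<ge> 0) \<and> (\<forall>x>k. \<eta> x = 0) \<and> (\<forall>x<k. \<bar>\<eta> (Suc x) - \<eta> x\<bar> = 1)}"

definition extend :: "path \<Rightarrow> nat \<Rightarrow> int \<Rightarrow> path" where
  "extend \<eta> k s = \<eta>(Suc k := \<eta> k + s)"

lemma paths_nonneg: "\<eta> \<in> paths h k \<Longrightarrow> x \<le> k \<Longrightarrow> \<eta> x \<ge> 0"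
  by (simp add: paths_def)

lemma paths_0: "h \<ge> 0 \<Longrightarrow> paths h 0 = {(\<lambda>x. if x = 0 then h else 0)}"
  unfolding paths_def by (auto simp: fun_eq_iff)

lemma sum_paths_0: "h \<ge> 0 \<Longrightarrow> (\<Sum>\<eta>\<in>paths h 0. g \<eta>) = g (\<lambda>x. if x = 0 then h else 0)"
  using paths_0 by simp

lemma extend_Suc: "extend \<eta> k s (Suc k) = \<eta> k + s"
  unfolding extend_def by simp

lemma extend_in_paths:
  assumes "\<eta> \<in> paths h k" "s = 1 \<or> s = -1" "\<eta> k + s \<ge> 0"
  shows "extend \<eta> k s \<in> paths h (Suc k)"
  using assms unfolding paths_def extend_def by (auto simp: less_Suc_eq le_Suc_eq)

lemma paths_Suc_cases:
  assumes "\<eta>' \<in> paths h (Suc k)"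
  obtains \<eta> where "\<eta> \<in> paths h k" "\<eta>' = extend \<eta> k 1"
    | \<eta> where "\<eta> \<in> paths h k" "\<eta> k \<ge> 1" "\<eta>' = extend \<eta> k (-1)"
proof -
  let ?\<eta> = "\<eta>'(Suc k := 0)"
  have \<eta>: "?\<eta> \<in> paths h k"
    using assms unfolding paths_def by (auto simp: less_Suc_eq le_Suc_eq)
  have "\<bar>\<eta>' (Suc k) - \<eta>' k\<bar> = 1" "\<eta>' (Suc k) \<ge> 0"
    using assms unfolding paths_def by auto
  then consider "\<eta>' (Suc k) = \<eta>' k + 1" | "\<eta>' k \<ge> 1" "\<eta>' (Suc k) = \<eta>' k - 1"
    by linarith
  then show thesis
    by cases (use \<eta> that in \<open>auto simp: extend_def fun_eq_iff\<close>)
qed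

lemma paths_Suc:
  "paths h (Suc k) =
     (\<lambda>\<eta>. extend \<eta> k 1) ` paths h k \<union> (\<lambda>\<eta>. extend \<eta> k (-1)) ` {\<eta>\<in>paths h k. \<eta> k \<ge> 1}"
proof (intro subset_antisym subsetI)
  fix \<eta>' assume "\<eta>' \<in> paths h (Suc k)"
  then show "\<eta>' \<in> (\<lambda>\<eta>. extend \<eta> k 1) ` paths h k \<union> (\<lambda>\<eta>. extend \<eta> k (-1)) ` {\<eta>\<in>paths h k. \<eta> k \<ge> 1}"
    by (cases rule: paths_Suc_cases) auto
next
  fix \<eta>' assume "\<eta>' \<in> (\<lambda>\<eta>. extend \<eta> k 1) ` paths h k \<union> (\<lambda>\<eta>. extend \<eta> k (-1)) ` {\<eta>\<in>paths h k. \<eta> k \<ge> 1}"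
  then show "\<eta>' \<in> paths h (Suc k)"
    by (auto intro!: extend_in_paths simp: paths_nonneg)
qed

lemma finite_paths: "h \<ge> 0 \<Longrightarrow> finite (paths h k)"
  by (induction k) (simp_all add: paths_0 paths_Suc)

lemma inj_on_extend: "inj_on (\<lambda>\<eta>. extend \<eta> k s) (paths h k)"
proof (rule inj_onI)
  fix \<eta> \<xi> assume "\<eta> \<in> paths h k" "\<xi> \<in> paths h k" "extend \<eta> k s = extend \<xi> k s"
  then have "\<eta> = (extend \<eta> k s)(Suc k := 0)" "\<xi> = (extend \<xi> k s)(Suc k := 0)"
    unfolding paths_def extend_def by (auto simp: fun_eq_iff)
  then show "\<eta> = \<xi>" using \<open>extend \<eta> k s = extend \<xi> k s\<close> by simp
qed

lemma sum_paths_Suc: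
  fixes g :: "path \<Rightarrow> 'a::comm_monoid_add"
  assumes "h \<ge> 0"
  shows "(\<Sum>\<eta>'\<in>paths h (Suc k). g \<eta>') =
     (\<Sum>\<eta>\<in>paths h k. g (extend \<eta> k 1) + (if \<eta> k \<ge> 1 then g (extend \<eta> k (-1)) else 0))"
proof -
  have fin: "finite (paths h k)" using finite_paths[OF assms] .
  have disj: "(\<lambda>\<eta>. extend \<eta> k 1) ` paths h k \<inter> (\<lambda>\<eta>. extend \<eta> k (-1)) ` {\<eta>\<in>paths h k. \<eta> k \<ge> 1} = {}"
  proof (rule ccontr)
    assume "\<not> ?thesis"
    then obtain \<eta> \<xi> where eq: "extend \<eta> k 1 = extend \<xi> k (-1)" by blast
    have "\<eta> k = \<xi> k" "\<eta> k + 1 = \<xi> k - 1"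
      using fun_cong[OF eq, of k] fun_cong[OF eq, of "Suc k"] unfolding extend_def by simp_all
    then show False by simp
  qed
  have "(\<Sum>\<eta>'\<in>paths h (Suc k). g \<eta>') =
      (\<Sum>\<eta>'\<in>(\<lambda>\<eta>. extend \<eta> k 1) ` paths h k. g \<eta>') +
      (\<Sum>\<eta>'\<in>(\<lambda>\<eta>. extend \<eta> k (-1)) ` {\<eta>\<in>paths h k. \<eta> k \<ge> 1}. g \<eta>')"
    unfolding paths_Suc by (rule sum.union_disjoint) (use fin disj in auto)
  also have "\<dots> = (\<Sum>\<eta>\<in>paths h k. g (extend \<eta> k 1)) + (\<Sum>\<eta>\<in>{\<eta>\<in>paths h k. \<eta> k \<ge> 1}. g (extend \<eta> k (-1)))"
    by (subst sum.reindex, rule inj_on_extend, simp,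
        subst sum.reindex, rule inj_on_subset[OF inj_on_extend], auto)
  also have "\<dots> = (\<Sum>\<eta>\<in>paths h k. g (extend \<eta> k 1) + (if \<eta> k \<ge> 1 then g (extend \<eta> k (-1)) else 0))"
    by (simp add: sum.distrib sum.inter_filter[OF fin])
  finally show ?thesis .
qed

lemma paths_le: "\<eta> \<in> paths h k \<Longrightarrow> x \<le> k \<Longrightarrow> \<eta> x \<le> h + int x"
proof (induction x)
  case (Suc x)
  then have "\<bar>\<eta> (Suc x) - \<eta> x\<bar> = 1" unfolding paths_def by auto
  with Suc show ?case by auto
qed (simp add: paths_def)

lemma paths_end_range: "\<eta> \<in> paths h m \<Longrightarrow> \<eta> m \<in> {0..h + int m}"
  using paths_le[of \<eta> h m m] paths_nonneg[of \<eta> h m m] by auto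

lemma states_eq_paths:
  "states a N = {\<eta> \<in> paths (even_ceil (a * real N)) N. \<eta> N = even_ceil (a * real N)}"
  unfolding states_def paths_def by auto

lemma finite_zeros: "finite {x. x \<le> (k::nat) \<and> \<eta> x = 0}"
  by (rule finite_subset[of _ "{..k}"]) auto

lemma H_pos_iff: "H N \<xi> > 0 \<longleftrightarrow> (\<exists>y\<le>N. \<xi> y = 0)"
  unfolding H_def using finite_zeros[of N \<xi>] by (auto simp: card_gt_0_iff)

lemma H_0_const: "h \<noteq> 0 \<Longrightarrow> H 0 (\<lambda>x. if x = 0 then h else 0) = 0"
  unfolding H_def by auto

lemma H_eq_0_end_nonzero: "H k \<eta> = 0 \<Longrightarrow> \<eta> k \<noteq> 0"
  using finite_zeros[of k \<eta>] unfolding H_def by auto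

lemma H_extend: "H (Suc k) (extend \<eta> k s) = H k \<eta> + (if \<eta> k + s = 0 then 1 else 0)"
proof -
  have "{x. x \<le> Suc k \<and> extend \<eta> k s x = 0} =
      {x. x \<le> k \<and> \<eta> x = 0} \<union> (if \<eta> k + s = 0 then {Suc k} else {})"
    unfolding extend_def by (auto simp: le_Suc_eq)
  then show ?thesis unfolding H_def by (auto simp: card_insert_if)
qed

lemma H_extend_eq_0: "H (Suc k) (extend \<eta> k s) = 0 \<longleftrightarrow> H k \<eta> = 0 \<and> \<eta> k + s \<noteq> 0"
  by (simp add: H_extend)

text \<open>For \<open>lam = 1 + 1/r\<^sup>2\<close> this is a positive eigenfunction, with eigenvalue \<open>r + 1/r\<close>,
  of the transfer operator of the walk that gains a factor \<open>lam\<close> at each visit to 0.\<close>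

definition eigenfun :: "real \<Rightarrow> real \<Rightarrow> int \<Rightarrow> real" where
  "eigenfun lam r j = (if j = 0 then 1/lam else r powr (real_of_int j))"

lemma eigenfun_step:
  fixes r lam :: real and j :: int
  assumes r: "r > 0" and lam: "lam = 1 + 1/r^2" and j: "j \<ge> 0"
  shows "lam ^ (if j + 1 = 0 then 1 else 0) * eigenfun lam r (j+1) +
         (if j \<ge> 1 then lam ^ (if j + (-1) = 0 then 1 else 0) * eigenfun lam r (j + (-1)) else 0)
       = (r + 1/r) * eigenfun lam r j"
proof -
  have lam0: "lam > 0" using lam r by (simp add: add_pos_pos)
  consider "j = 0" | "j = 1" | "j \<ge> 2" using j by linarith
  then show ?thesis
  proof cases
    case 1
    have lr: "lam * r = r + 1/r" using r unfolding lam by (simp add: field_simps power2_eq_square)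
    have "r = (r + 1/r) / lam" using lam0 lr by (simp add: eq_divide_eq mult.commute)
    with 1 r show ?thesis by (simp add: eigenfun_def)
  next
    case 2
    have "r powr 2 = r^2" using r by (simp add: powr_realpow)
    then show ?thesis using 2 r lam0 by (simp add: eigenfun_def field_simps power2_eq_square)
  next
    case 3
    have "r powr (real_of_int (j+1)) = r powr (real_of_int j) * r" using r by (simp add: powr_add)
    moreover have "r powr (real_of_int (j-1)) = r powr (real_of_int j) / r" using r by (simp add: powr_diff)
    ultimately show ?thesis using 3 r by (simp add: eigenfun_def field_simps)
  qed
qed

lemma sum_paths_eigenfun:
  fixes r lam :: real and h :: int
  assumes r: "r > 0" and lam: "lam = 1 + 1/r^2" and h: "h \<ge> 1"
  shows "(\<Sum>\<eta>\<in>paths h k. lam ^ (H k \<eta>) * eigenfun lam r (\<eta> k)) = (r + 1/r)^k * eigenfun lam r h"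
proof (induction k)
  case 0 then show ?case using h by (simp add: sum_paths_0 H_0_const)
next
  case (Suc k)
  have "(\<Sum>\<eta>\<in>paths h (Suc k). lam ^ (H (Suc k) \<eta>) * eigenfun lam r (\<eta> (Suc k)))
     = (\<Sum>\<eta>\<in>paths h k. (r + 1/r) * (lam ^ (H k \<eta>) * eigenfun lam r (\<eta> k)))"
  proof (subst sum_paths_Suc, use h in simp, rule sum.cong[OF refl])
    fix \<eta> assume "\<eta> \<in> paths h k"
    then have j: "\<eta> k \<ge> 0" by (simp add: paths_nonneg)
    have "lam ^ H (Suc k) (extend \<eta> k 1) * eigenfun lam r (extend \<eta> k 1 (Suc k)) +
        (if 1 \<le> \<eta> k then lam ^ H (Suc k) (extend \<eta> k (- 1)) * eigenfun lam r (extend \<eta> k (- 1) (Suc k)) else 0)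
      = lam ^ H k \<eta> * (lam ^ (if \<eta> k + 1 = 0 then 1 else 0) * eigenfun lam r (\<eta> k+1) +
         (if \<eta> k \<ge> 1 then lam ^ (if \<eta> k + (-1) = 0 then 1 else 0) * eigenfun lam r (\<eta> k + (-1)) else 0))"
      by (simp add: H_extend extend_Suc power_add algebra_simps)
    also have "\<dots> = (r + 1/r) * (lam ^ (H k \<eta>) * eigenfun lam r (\<eta> k))"
      using eigenfun_step[OF r lam j] by simp
    finally show "lam ^ H (Suc k) (extend \<eta> k 1) * eigenfun lam r (extend \<eta> k 1 (Suc k)) +
        (if 1 \<le> \<eta> k then lam ^ H (Suc k) (extend \<eta> k (- 1)) * eigenfun lam r (extend \<eta> k (- 1) (Suc k)) else 0)
      = (r + 1/r) * (lam ^ (H k \<eta>) * eigenfun lam r (\<eta> k))" .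
  qed
  also have "\<dots> = (r + 1/r)^Suc k * eigenfun lam r h" using Suc by (simp add: sum_distrib_left[symmetric])
  finally show ?case .
qed

lemma sum_avoiding_powr_end_le:
  fixes r :: real and h :: int
  assumes r: "r > 0" and h: "h \<ge> 1"
  shows "(\<Sum>\<eta>\<in>paths h k. if H k \<eta> = 0 then r powr (\<eta> k) else 0) \<le> r powr h * (r + 1/r)^k"
proof (induction k)
  case 0 then show ?case using h by (simp add: sum_paths_0 H_0_const)
next
  case (Suc k)
  have "(\<Sum>\<eta>\<in>paths h (Suc k). if H (Suc k) \<eta> = 0 then r powr (\<eta> (Suc k)) else 0)
     \<le> (\<Sum>\<eta>\<in>paths h k. (r + 1/r) * (if H k \<eta> = 0 then r powr (\<eta> k) else 0))"
  proof (subst sum_paths_Suc, use h in simp, rule sum_mono)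
    fix \<eta> assume "\<eta> \<in> paths h k"
    have a: "r powr (real_of_int (\<eta> k + 1)) = r powr (real_of_int (\<eta> k)) * r" using r by (simp add: powr_add)
    have b: "r powr (real_of_int (\<eta> k + -1)) = r powr (real_of_int (\<eta> k)) / r" using r by (simp add: powr_diff)
    show "(if H (Suc k) (extend \<eta> k 1) = 0 then r powr (extend \<eta> k 1 (Suc k)) else 0) +
        (if 1 \<le> \<eta> k then if H (Suc k) (extend \<eta> k (- 1)) = 0 then r powr (extend \<eta> k (- 1) (Suc k)) else 0 else 0)
        \<le> (r + 1/r) * (if H k \<eta> = 0 then r powr (\<eta> k) else 0)"
      unfolding H_extend_eq_0 extend_Suc a b using r by (auto simp: field_simps)
  qed
  also have "\<dots> = (r + 1/r) * (\<Sum>\<eta>\<in>paths h k. if H k \<eta> = 0 then r powr (\<eta> k) else 0)"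
    by (simp add: sum_distrib_left)
  also have "\<dots> \<le> (r + 1/r) * (r powr h * (r + 1/r)^k)"
    by (rule mult_left_mono[OF Suc]) (use r in simp)
  also have "\<dots> = r powr h * (r + 1/r)^Suc k" by simp
  finally show ?case .
qed

lemma sum_avoiding_end:
  fixes h :: int
  assumes h: "h \<ge> 1"
  shows "(\<Sum>\<eta>\<in>paths h k. if H k \<eta> = 0 then real_of_int (\<eta> k) else 0) = h * 2^k"
proof (induction k)
  case 0 then show ?case using h by (simp add: sum_paths_0 H_0_const)
next
  case (Suc k)
  have "(\<Sum>\<eta>\<in>paths h (Suc k). if H (Suc k) \<eta> = 0 then real_of_int (\<eta> (Suc k)) else 0)
     = (\<Sum>\<eta>\<in>paths h k. 2 * (if H k \<eta> = 0 then real_of_int (\<eta> k) else 0))"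
  proof (subst sum_paths_Suc, use h in simp, rule sum.cong[OF refl])
    fix \<eta> assume "\<eta> \<in> paths h k"
    then have "\<eta> k \<ge> 0" by (simp add: paths_nonneg)
    then show "(if H (Suc k) (extend \<eta> k 1) = 0 then real_of_int (extend \<eta> k 1 (Suc k)) else 0) +
        (if 1 \<le> \<eta> k then if H (Suc k) (extend \<eta> k (- 1)) = 0 then real_of_int (extend \<eta> k (- 1) (Suc k)) else 0 else 0)
        = 2 * (if H k \<eta> = 0 then real_of_int (\<eta> k) else 0)"
      unfolding H_extend_eq_0 extend_Suc using H_eq_0_end_nonzero[of k \<eta>] by (cases "H k \<eta> = 0") auto
  qed
  also have "\<dots> = h * 2 ^ Suc k" using Suc by (simp add: sum_distrib_left[symmetric])
  finally show ?case .
qed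

text \<open>An exponential martingale tilted by \<open>\<sigma>\<close> until time \<open>t\<close> and by \<open>1/\<sigma>\<close> afterwards; it is
  large on paths that dip far below \<open>h\<close> at time \<open>t\<close> and come back.\<close>

definition tilt :: "real \<Rightarrow> int \<Rightarrow> nat \<Rightarrow> nat \<Rightarrow> path \<Rightarrow> real" where
  "tilt \<sigma> h t k \<eta> = \<sigma> powr (real_of_int (h - \<eta> (min t k))) * \<sigma> powr (real_of_int (\<eta> k - \<eta> (min t k)))"

lemma sum_paths_tilt_le:
  fixes \<sigma> :: real and h :: int
  assumes s: "\<sigma> > 0" and h: "h \<ge> 0"
  shows "(\<Sum>\<eta>\<in>paths h k. tilt \<sigma> h t k \<eta>) \<le> (\<sigma> + 1/\<sigma>)^k"
proof (induction k)
  case 0 then show ?case using h by (simp add: sum_paths_0 tilt_def)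
next
  case (Suc k)
  have "(\<Sum>\<eta>\<in>paths h (Suc k). tilt \<sigma> h t (Suc k) \<eta>) \<le> (\<Sum>\<eta>\<in>paths h k. (\<sigma> + 1/\<sigma>) * tilt \<sigma> h t k \<eta>)"
  proof (subst sum_paths_Suc, use h in simp, rule sum_mono)
    fix \<eta> assume "\<eta> \<in> paths h k"
    have "tilt \<sigma> h t (Suc k) (extend \<eta> k 1) + tilt \<sigma> h t (Suc k) (extend \<eta> k (-1)) = (\<sigma> + 1/\<sigma>) * tilt \<sigma> h t k \<eta>"
    proof (cases "t \<le> k")
      case True
      then have "min t (Suc k) = t" "min t k = t" "extend \<eta> k 1 t = \<eta> t" "extend \<eta> k (-1) t = \<eta> t" by (auto simp: extend_def)
      then show ?thesis using s unfolding tilt_def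
        by (simp add: extend_Suc powr_add powr_diff algebra_simps field_simps)
    next
      case False
      then have "min t (Suc k) = Suc k" "min t k = k" by auto
      then show ?thesis using s unfolding tilt_def
        by (simp add: extend_Suc powr_add powr_diff algebra_simps field_simps)
    qed
    moreover have "tilt \<sigma> h t (Suc k) (extend \<eta> k (-1)) \<ge> 0" unfolding tilt_def by simp
    ultimately show "tilt \<sigma> h t (Suc k) (extend \<eta> k 1) + (if 1 \<le> \<eta> k then tilt \<sigma> h t (Suc k) (extend \<eta> k (- 1)) else 0)
         \<le> (\<sigma> + 1/\<sigma>) * tilt \<sigma> h t k \<eta>" by auto
  qed
  also have "\<dots> \<le> (\<sigma> + 1/\<sigma>)^Suc k" using Suc s
    by (simp add: sum_distrib_left[symmetric] mult_left_mono add_pos_pos)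
  finally show ?case .
qed

definition glue :: "nat \<Rightarrow> path \<Rightarrow> path \<Rightarrow> path" where
  "glue m \<eta> \<xi> x = (if x \<le> m then \<eta> x else if x \<le> 2*m then \<xi> (2*m - x) else 0)"

lemma glue_in_paths:
  assumes "\<eta> \<in> paths h m" "\<xi> \<in> paths h m" "\<eta> m = \<xi> m" "m \<ge> 1"
  shows "glue m \<eta> \<xi> \<in> paths h (2*m)" "glue m \<eta> \<xi> (2*m) = h"
proof -
  show "glue m \<eta> \<xi> (2*m) = h" using assms unfolding glue_def paths_def by auto
  have st: "\<bar>glue m \<eta> \<xi> (Suc x) - glue m \<eta> \<xi> x\<bar> = 1" if "x < 2*m" for x
  proof -
    consider "x < m" | "x = m" | "m < x" by linarith
    then show ?thesis
    proof cases
      case 1 then show ?thesis using assms(1) unfolding glue_def paths_def by auto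
    next
      case 2
      have "m - 1 < m" using assms(4) by simp
      then have "\<bar>\<xi> (Suc (m-1)) - \<xi> (m-1)\<bar> = 1" using assms(2) unfolding paths_def by blast
      moreover have "Suc (m-1) = m" "2*m - Suc m = m - 1" using assms(4) by auto
      ultimately show ?thesis using 2 assms(3) unfolding glue_def by auto
    next
      case 3
      have "\<bar>\<xi> (Suc (2*m - Suc x)) - \<xi> (2*m - Suc x)\<bar> = 1" using assms(2) 3 that unfolding paths_def by auto
      moreover have "Suc (2*m - Suc x) = 2*m - x" using that by auto
      ultimately show ?thesis using 3 that unfolding glue_def by (auto simp: abs_minus_commute)
    qed
  qed
  show "glue m \<eta> \<xi> \<in> paths h (2*m)"
    unfolding paths_def using assms st by (auto simp: glue_def paths_def)
qed

lemma inj_on_glue: "inj_on (\<lambda>p. glue m (fst p) (snd p)) {p\<in>paths h m \<times> paths h m. fst p m = snd p m}"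
proof (rule inj_onI)
  fix p q assume p: "p \<in> {p\<in>paths h m \<times> paths h m. fst p m = snd p m}" and q: "q \<in> {p\<in>paths h m \<times> paths h m. fst p m = snd p m}"
    and eq: "glue m (fst p) (snd p) = glue m (fst q) (snd q)"
  have f: "fst p = fst q"
  proof
    fix x show "fst p x = fst q x"
    proof (cases "x \<le> m")
      case True then show ?thesis using fun_cong[OF eq, of x] unfolding glue_def by simp
    next
      case False then show ?thesis using p q unfolding paths_def by auto
    qed
  qed
  moreover have "snd p = snd q"
  proof
    fix y show "snd p y = snd q y"
    proof (cases "y < m")
      case True
      then have "2*m - (2*m - y) = y" "2*m - y \<le> 2*m" "\<not> 2*m - y \<le> m" by auto
      then show ?thesis using fun_cong[OF eq, of "2*m - y"] unfolding glue_def by simp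
    next
      case False
      show ?thesis
      proof (cases "y = m")
        case True then show ?thesis using p q f by auto
      next
        case False
        then have "y > m" using \<open>\<not> y < m\<close> by simp
        then show ?thesis using p q unfolding paths_def by auto
      qed
    qed
  qed
  ultimately show "p = q" by (simp add: prod_eq_iff)
qed

lemma H_glue_ge:
  assumes "m \<ge> 1" "\<eta> m = \<xi> m"
  shows "H m \<eta> + H m \<xi> \<le> H (2*m) (glue m \<eta> \<xi>) + 1"
proof -
  let ?A = "{x. x \<le> m \<and> \<eta> x = 0}" and ?B = "(\<lambda>y. 2*m - y) ` {y. y \<le> m \<and> \<xi> y = 0}"
  have fA: "finite ?A" by (rule finite_zeros)
  have fB: "finite ?B" using finite_zeros by auto
  have cB: "card ?B = H m \<xi>" unfolding H_def by (rule card_image) (auto simp: inj_on_def)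
  have int: "?A \<inter> ?B \<subseteq> {m}"
  proof
    fix x assume x: "x \<in> ?A \<inter> ?B"
    then have "x \<le> m" by blast
    moreover from x obtain y where "y \<le> m" "x = 2*m - y" by blast
    ultimately show "x \<in> {m}" by simp
  qed
  then have "card (?A \<inter> ?B) \<le> card {m}" by (intro card_mono) auto
  then have "card (?A \<inter> ?B) \<le> 1" by simp
  have sub: "?A \<union> ?B \<subseteq> {x. x \<le> 2*m \<and> glue m \<eta> \<xi> x = 0}"
  proof
    fix x assume "x \<in> ?A \<union> ?B"
    then consider "x \<in> ?A" | "x \<in> ?B" by blast
    then show "x \<in> {x. x \<le> 2*m \<and> glue m \<eta> \<xi> x = 0}"
    proof cases
      case 1 then show ?thesis unfolding glue_def by auto
    next
      case 2
      then obtain y where y: "y \<le> m" "\<xi> y = 0" "x = 2*m - y" by blast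
      show ?thesis
      proof (cases "y = m")
        case True then show ?thesis using y assms(2) unfolding glue_def by auto
      next
        case False
        then have "\<not> x \<le> m" "x \<le> 2*m" "2*m - x = y" using y by auto
        then show ?thesis using y unfolding glue_def by auto
      qed
    qed
  qed
  have "card (?A \<union> ?B) \<le> H (2*m) (glue m \<eta> \<xi>)" unfolding H_def by (rule card_mono[OF finite_zeros sub])
  moreover have "card ?A + card ?B = card (?A \<union> ?B) + card (?A \<inter> ?B)" by (rule card_Un_Int[OF fA fB])
  ultimately show ?thesis using \<open>card (?A \<inter> ?B) \<le> 1\<close> cB unfolding H_def by linarith
qed

lemma H_glue_eq_0:
  assumes "H m \<eta> = 0" "H m \<xi> = 0"
  shows "H (2*m) (glue m \<eta> \<xi>) = 0"
proof -
  have a: "\<forall>x\<le>m. \<eta> x \<noteq> 0" "\<forall>x\<le>m. \<xi> x \<noteq> 0" using assms finite_zeros[of m \<eta>] finite_zeros[of m \<xi>] unfolding H_def by auto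
  have "{x. x \<le> 2*m \<and> glue m \<eta> \<xi> x = 0} = {}" using a unfolding glue_def by auto
  then show ?thesis unfolding H_def by simp
qed

lemma H_glue_pos:
  assumes "H m \<eta> > 0"
  shows "H (2*m) (glue m \<eta> \<xi>) > 0"
proof -
  have "{x. x \<le> m \<and> \<eta> x = 0} \<noteq> {}" using assms unfolding H_def by (auto simp: card_gt_0_iff)
  then obtain x where "x \<le> m" "\<eta> x = 0" by blast
  then have "x \<in> {x. x \<le> 2*m \<and> glue m \<eta> \<xi> x = 0}" unfolding glue_def by auto
  then have "{x. x \<le> 2*m \<and> glue m \<eta> \<xi> x = 0} \<noteq> {}" by blast
  then show ?thesis unfolding H_def using finite_zeros[of "2*m"] by (simp add: card_gt_0_iff)
qed

lemma sum_square_le_card_fibres: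
  fixes u :: "'a \<Rightarrow> real" and e :: "'a \<Rightarrow> 'b"
  assumes X: "finite X" and J: "finite J" "J \<noteq> {}" and eJ: "e ` X \<subseteq> J"
  shows "(\<Sum>\<eta>\<in>X. u \<eta>)^2 / card J \<le> (\<Sum>\<eta>\<in>X. u \<eta> * (\<Sum>\<xi>\<in>{\<xi>\<in>X. e \<xi> = e \<eta>}. u \<xi>))"
proof -
  let ?U = "\<lambda>j. (\<Sum>\<xi>\<in>{\<xi>\<in>X. e \<xi> = j}. u \<xi>)"
  have "(\<Sum>\<eta>\<in>X. u \<eta>) = (\<Sum>j\<in>J. ?U j)" using sum.group[OF X J(1) eJ, of u] by simp
  moreover have "(\<Sum>\<eta>\<in>X. u \<eta> * ?U (e \<eta>)) = (\<Sum>j\<in>J. (\<Sum>\<eta>\<in>{\<eta>\<in>X. e \<eta> = j}. u \<eta> * ?U (e \<eta>)))"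
    using sum.group[OF X J(1) eJ, of "\<lambda>\<eta>. u \<eta> * ?U (e \<eta>)"] by simp
  moreover have "\<dots> = (\<Sum>j\<in>J. (?U j)^2)"
    by (rule sum.cong[OF refl]) (simp add: power2_eq_square sum_distrib_right)
  moreover have "(\<Sum>j\<in>J. ?U j)^2 \<le> (\<Sum>j\<in>J. (?U j)^2) * card J" by (rule sum_squared_le_sum_of_squares)
  moreover have "card J > 0" using J by (simp add: card_gt_0_iff)
  ultimately show ?thesis by (simp add: divide_le_eq)
qed

lemma hitting_weight_square_le:
  fixes lam :: real and h :: int
  assumes lam: "lam \<ge> 1" and h: "h \<ge> 1" and m: "m \<ge> 1"
  shows "(\<Sum>\<eta>\<in>{\<eta>\<in>paths h m. H m \<eta> > 0}. lam ^ H m \<eta>)^2 / (lam * (h + m + 1))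
     \<le> (\<Sum>\<eta>\<in>{\<eta>\<in>paths h (2*m). \<eta> (2*m) = h \<and> H (2*m) \<eta> > 0}. lam ^ H (2*m) \<eta>)"
proof -
  let ?X = "{\<eta>\<in>paths h m. H m \<eta> > 0}"
  let ?S = "Sigma ?X (\<lambda>\<eta>. {\<xi>\<in>paths h m. \<xi> m = \<eta> m})"
  let ?c = "\<lambda>p. glue m (fst p) (snd p)"
  let ?u = "\<lambda>\<eta>. lam ^ H m \<eta>"
  let ?J = "{0..h + int m}"
  have fin: "finite (paths h m)" "finite (paths h (2*m))" using finite_paths h by auto
  then have fX: "finite ?X" by auto
  have inj: "inj_on ?c ?S" by (rule inj_on_subset[OF inj_on_glue]) auto
  have img: "?c ` ?S \<subseteq> {\<eta>\<in>paths h (2*m). \<eta> (2*m) = h \<and> H (2*m) \<eta> > 0}"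
    using glue_in_paths[OF _ _ _ m] H_glue_pos by auto
  have cardJ: "real (card ?J) = h + m + 1" using h by simp
  have "(\<Sum>\<eta>\<in>?X. ?u \<eta>)^2 / (lam * (h + m + 1)) = ((\<Sum>\<eta>\<in>?X. ?u \<eta>)^2 / card ?J) / lam"
    unfolding cardJ by (simp add: divide_divide_eq_left mult.commute)
  also have "\<dots> \<le> (\<Sum>\<eta>\<in>?X. ?u \<eta> * (\<Sum>\<xi>\<in>{\<xi>\<in>?X. \<xi> m = \<eta> m}. ?u \<xi>)) / lam"
    by (intro divide_right_mono sum_square_le_card_fibres[OF fX]) (use h lam paths_end_range in auto)
  also have "\<dots> \<le> (\<Sum>\<eta>\<in>?X. ?u \<eta> * (\<Sum>\<xi>\<in>{\<xi>\<in>paths h m. \<xi> m = \<eta> m}. ?u \<xi>)) / lam"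
    by (intro divide_right_mono sum_mono mult_left_mono sum_mono2) (use fin lam in auto)
  also have "\<dots> = (\<Sum>(\<eta>,\<xi>)\<in>?S. ?u \<eta> * ?u \<xi> / lam)"
    by (subst sum.Sigma[symmetric]) (use fX fin in \<open>auto simp: sum_divide_distrib sum_distrib_left\<close>)
  also have "\<dots> \<le> (\<Sum>p\<in>?S. lam ^ H (2*m) (?c p))"
  proof (rule sum_mono)
    fix p assume p: "p \<in> ?S"
    obtain \<eta> \<xi> where [simp]: "p = (\<eta>, \<xi>)" by fastforce
    have "?u \<eta> * ?u \<xi> \<le> lam ^ (H (2*m) (glue m \<eta> \<xi>) + 1)"
      unfolding power_add[symmetric] using p by (intro power_increasing[OF H_glue_ge[OF m] lam]) auto
    then show "(case p of (\<eta>, \<xi>) \<Rightarrow> ?u \<eta> * ?u \<xi> / lam) \<le> lam ^ H (2*m) (?c p)"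
      using lam by (simp add: divide_le_eq mult.commute)
  qed
  also have "\<dots> = (\<Sum>\<eta>\<in>?c ` ?S. lam ^ H (2*m) \<eta>)"
    by (simp add: sum.reindex[OF inj])
  also have "\<dots> \<le> (\<Sum>\<eta>\<in>{\<eta>\<in>paths h (2*m). \<eta> (2*m) = h \<and> H (2*m) \<eta> > 0}. lam ^ H (2*m) \<eta>)"
    by (rule sum_mono2) (use fin img lam in auto)
  finally show ?thesis .
qed

lemma avoiding_card_square_le:
  fixes h :: int
  assumes h: "h \<ge> 1" and m: "m \<ge> 1"
  shows "(real (card {\<eta>\<in>paths h m. H m \<eta> = 0}))^2 / (h + m + 1)
     \<le> card {\<eta>\<in>paths h (2*m). \<eta> (2*m) = h \<and> H (2*m) \<eta> = 0}"
proof -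
  let ?X = "{\<eta>\<in>paths h m. H m \<eta> = 0}"
  let ?S = "Sigma ?X (\<lambda>\<eta>. {\<xi>\<in>?X. \<xi> m = \<eta> m})"
  let ?c = "\<lambda>p. glue m (fst p) (snd p)"
  let ?J = "{0..h + int m}"
  have fin: "finite (paths h m)" "finite (paths h (2*m))" using finite_paths h by auto
  then have fX: "finite ?X" by auto
  have inj: "inj_on ?c ?S" by (rule inj_on_subset[OF inj_on_glue]) auto
  have img: "?c ` ?S \<subseteq> {\<eta>\<in>paths h (2*m). \<eta> (2*m) = h \<and> H (2*m) \<eta> = 0}"
    using glue_in_paths[OF _ _ _ m] H_glue_eq_0 by auto
  have cardJ: "real (card ?J) = h + m + 1" using h by simp
  have "(real (card ?X))^2 / (h + m + 1) = (\<Sum>\<eta>\<in>?X. 1::real)^2 / card ?J"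
    unfolding cardJ by simp
  also have "\<dots> \<le> (\<Sum>\<eta>\<in>?X. 1 * (\<Sum>\<xi>\<in>{\<xi>\<in>?X. \<xi> m = \<eta> m}. 1::real))"
    by (rule sum_square_le_card_fibres[OF fX]) (use h paths_end_range in auto)
  also have "\<dots> = card ?S"
    by (subst card_SigmaI[OF fX]) (use fin in auto)
  also have "\<dots> = card (?c ` ?S)" using card_image[OF inj] by simp
  also have "\<dots> \<le> card {\<eta>\<in>paths h (2*m). \<eta> (2*m) = h \<and> H (2*m) \<eta> = 0}"
    using card_mono[OF _ img] fin by simp
  finally show ?thesis .
qed

lemma card_bridges_low_at_le:
  fixes \<sigma> :: real and h :: int
  assumes s: "\<sigma> \<ge> 1" and h: "h \<ge> 0" and t: "t \<le> N"
  shows "real (card {\<eta>\<in>paths h N. \<eta> N = h \<and> \<eta> t \<le> 1}) \<le> (\<sigma> + 1/\<sigma>)^N / \<sigma> powr (2*(h-1))"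
proof -
  have fin: "finite (paths h N)" using finite_paths h by auto
  have sp: "\<sigma> powr (2*(h-1)) > 0" using s by simp
  have "real (card {\<eta>\<in>paths h N. \<eta> N = h \<and> \<eta> t \<le> 1}) = (\<Sum>\<eta>\<in>paths h N. if \<eta> N = h \<and> \<eta> t \<le> 1 then 1 else 0)"
    using fin by (simp add: sum.If_cases Int_def)
  also have "\<dots> \<le> (\<Sum>\<eta>\<in>paths h N. tilt \<sigma> h t N \<eta> / \<sigma> powr (2*(h-1)))"
  proof (rule sum_mono)
    fix \<eta> assume "\<eta> \<in> paths h N"
    show "(if \<eta> N = h \<and> \<eta> t \<le> 1 then 1 else 0) \<le> tilt \<sigma> h t N \<eta> / \<sigma> powr (2*(h-1))"
    proof (cases "\<eta> N = h \<and> \<eta> t \<le> 1")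
      case True
      then have "tilt \<sigma> h t N \<eta> = \<sigma> powr (real_of_int (2*(h - \<eta> t)))" unfolding tilt_def using t s
        by (simp add: powr_add[symmetric] min_def)
      also have "\<dots> \<ge> \<sigma> powr (2*(h-1))" using True s by (intro powr_mono) auto
      finally show ?thesis using True sp by simp
    next
      case False
      have "tilt \<sigma> h t N \<eta> / \<sigma> powr (2*(h-1)) \<ge> 0" unfolding tilt_def by simp
      with False show ?thesis by (simp only: if_False)
    qed
  qed
  also have "\<dots> = (\<Sum>\<eta>\<in>paths h N. tilt \<sigma> h t N \<eta>) / \<sigma> powr (2*(h-1))" by (simp add: sum_divide_distrib)
  also have "\<dots> \<le> (\<sigma> + 1/\<sigma>)^N / \<sigma> powr (2*(h-1))"
    using sum_paths_tilt_le[of \<sigma> h t N] s h sp by (intro divide_right_mono) auto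
  finally show ?thesis .
qed

lemma card_bridges_low_le:
  fixes \<sigma> :: real and h :: int
  assumes s: "\<sigma> \<ge> 1" and h: "h \<ge> 0"
  shows "real (card {\<eta>\<in>paths h N. \<eta> N = h \<and> (\<exists>t\<le>N. \<eta> t \<le> 1)}) \<le> real (N+1) * ((\<sigma> + 1/\<sigma>)^N / \<sigma> powr (2*(h-1)))"
proof -
  have eq: "{\<eta>\<in>paths h N. \<eta> N = h \<and> (\<exists>t\<le>N. \<eta> t \<le> 1)} = (\<Union>t\<in>{..N}. {\<eta>\<in>paths h N. \<eta> N = h \<and> \<eta> t \<le> 1})" by blast
  have "card {\<eta>\<in>paths h N. \<eta> N = h \<and> (\<exists>t\<le>N. \<eta> t \<le> 1)} \<le> (\<Sum>t\<in>{..N}. card {\<eta>\<in>paths h N. \<eta> N = h \<and> \<eta> t \<le> 1})"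
    unfolding eq by (rule card_UN_le) (rule finite_atMost)
  then have "real (card {\<eta>\<in>paths h N. \<eta> N = h \<and> (\<exists>t\<le>N. \<eta> t \<le> 1)}) \<le> real (\<Sum>t\<in>{..N}. card {\<eta>\<in>paths h N. \<eta> N = h \<and> \<eta> t \<le> 1})"
    by (simp only: of_nat_le_iff)
  also have "\<dots> = (\<Sum>t\<in>{..N}. real (card {\<eta>\<in>paths h N. \<eta> N = h \<and> \<eta> t \<le> 1}))"
    by (simp only: of_nat_sum)
  also have "\<dots> \<le> (\<Sum>t\<in>{..N}. (\<sigma> + 1/\<sigma>)^N / \<sigma> powr (2*(h-1)))"
    by (rule sum_mono, rule card_bridges_low_at_le[OF s h]) auto
  also have "\<dots> = real (N+1) * ((\<sigma> + 1/\<sigma>)^N / \<sigma> powr (2*(h-1)))" by simp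
  finally show ?thesis .
qed

lemma finite_states: "even_ceil (a * real N) \<ge> 0 \<Longrightarrow> finite (states a N)"
  unfolding states_eq_paths using finite_paths by auto

lemma sum_pi_meas:
  assumes "Zpart lam a N > 0"
  shows "(\<Sum>\<eta>\<in>states a N. pi_meas lam a N \<eta>) = 1"
  using assms unfolding pi_meas_def Zpart_def by (simp add: sum_divide_distrib[symmetric])

lemma pi_meas_nonneg: "lam > 0 \<Longrightarrow> Zpart lam a N > 0 \<Longrightarrow> pi_meas lam a N \<eta> \<ge> 0"
  unfolding pi_meas_def by simp

lemma weighted_variance_shift:
  fixes p f :: "'a \<Rightarrow> real"
  assumes "(\<Sum>x\<in>S. p x) = 1"
  shows "(\<Sum>x\<in>S. p x * (f x)^2) - (\<Sum>x\<in>S. p x * f x)^2 = (\<Sum>x\<in>S. p x * (f x - c)^2) - ((\<Sum>x\<in>S. p x * f x) - c)^2"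
proof -
  have "(\<Sum>x\<in>S. p x * (f x - c)^2) = (\<Sum>x\<in>S. p x * (f x)^2) - 2 * c * (\<Sum>x\<in>S. p x * f x) + c^2 * (\<Sum>x\<in>S. p x)"
    by (simp add: power2_eq_square algebra_simps sum.distrib sum_subtractf sum_distrib_left)
  then show ?thesis using assms by (simp add: power2_eq_square algebra_simps)
qed

lemma variance_le_moment:
  assumes fin: "finite (states a N)" and Z: "Zpart lam a N > 0"
  shows "variance lam a N f \<le> (\<Sum>\<eta>\<in>states a N. pi_meas lam a N \<eta> * (f \<eta> - c)^2)"
  unfolding variance_def using weighted_variance_shift[OF sum_pi_meas[OF Z], of f c] by (smt (verit) zero_le_power2)

lemma variance_nonneg:
  assumes fin: "finite (states a N)" and Z: "Zpart lam a N > 0" and lam: "lam > 0"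
  shows "variance lam a N f \<ge> 0"
proof -
  let ?\<mu> = "\<Sum>\<eta>\<in>states a N. pi_meas lam a N \<eta> * f \<eta>"
  have "variance lam a N f = (\<Sum>\<eta>\<in>states a N. pi_meas lam a N \<eta> * (f \<eta> - ?\<mu>)^2)"
    unfolding variance_def using weighted_variance_shift[OF sum_pi_meas[OF Z], of f ?\<mu>] by simp
  also have "\<dots> \<ge> 0" by (intro sum_nonneg mult_nonneg_nonneg pi_meas_nonneg[OF lam Z]) auto
  finally show ?thesis .
qed

lemma rate_nonneg: "lam > 0 \<Longrightarrow> rate lam \<eta> x \<ge> 0"
  unfolding rate_def by auto

lemma rate_le_1: "lam > 0 \<Longrightarrow> rate lam \<eta> x \<le> 1"
  unfolding rate_def by auto

lemma dirichlet_term_le: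
  assumes fin: "finite (states a N)" and Z: "Zpart lam a N > 0" and lam: "lam > 0"
    and \<eta>: "\<eta> \<in> states a N" and x: "x \<in> {1..N-1}"
  shows "(1/2) * (pi_meas lam a N \<eta> * (rate lam \<eta> x * (f (flip \<eta> x) - f \<eta>)^2)) \<le> dirichlet lam a N f"
proof -
  have nn: "\<And>\<xi> y. 0 \<le> rate lam \<xi> y * (f (flip \<xi> y) - f \<xi>)^2" using rate_nonneg[OF lam] by simp
  have "pi_meas lam a N \<eta> * (rate lam \<eta> x * (f (flip \<eta> x) - f \<eta>)^2)
      \<le> pi_meas lam a N \<eta> * (\<Sum>y\<in>{1..N-1}. rate lam \<eta> y * (f (flip \<eta> y) - f \<eta>)^2)"
    by (intro mult_left_mono member_le_sum pi_meas_nonneg[OF lam Z] nn x) auto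
  also have "\<dots> \<le> (\<Sum>\<xi>\<in>states a N. pi_meas lam a N \<xi> * (\<Sum>y\<in>{1..N-1}. rate lam \<xi> y * (f (flip \<xi> y) - f \<xi>)^2))"
    by (rule member_le_sum[OF \<eta> _ fin]) (intro mult_nonneg_nonneg pi_meas_nonneg[OF lam Z] sum_nonneg nn)
  finally show ?thesis unfolding dirichlet_def by simp
qed

lemma dirichlet_nonneg:
  assumes Z: "Zpart lam a N > 0" and lam: "lam > 0"
  shows "dirichlet lam a N f \<ge> 0"
  unfolding dirichlet_def
  by (intro mult_nonneg_nonneg sum_nonneg pi_meas_nonneg[OF lam Z]) (auto intro: rate_nonneg[OF lam])

lemma paths_lipschitz:
  assumes "\<eta> \<in> paths h N" "x \<le> y" "y \<le> N"
  shows "\<bar>\<eta> y - \<eta> x\<bar> \<le> int y - int x"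
  using assms(2,3)
proof (induction y)
  case 0 then show ?case by simp
next
  case (Suc y)
  show ?case
  proof (cases "x = Suc y")
    case True then show ?thesis by simp
  next
    case False
    then have "x \<le> y" using Suc by simp
    moreover have "\<bar>\<eta> (Suc y) - \<eta> y\<bar> = 1" using assms(1) Suc(3) unfolding paths_def by auto
    ultimately show ?thesis using Suc by auto
  qed
qed

lemma paths_parity:
  assumes "\<eta> \<in> paths h N" "x \<le> N"
  shows "even (\<eta> x - h - int x)"
  using assms(2)
proof (induction x)
  case 0 then show ?case using assms(1) unfolding paths_def by simp
next
  case (Suc x)
  have "\<bar>\<eta> (Suc x) - \<eta> x\<bar> = 1" using assms(1) Suc(2) unfolding paths_def by auto
  then have "\<eta> (Suc x) = \<eta> x + 1 \<or> \<eta> (Suc x) = \<eta> x - 1" by auto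
  then show ?case using Suc by auto
qed

definition lowest :: "int \<Rightarrow> nat \<Rightarrow> nat \<Rightarrow> int" where
  "lowest h N x = max (h - int x) (max (h - int N + int x) (int (x mod 2)))"

lemma lowest_le:
  assumes "\<eta> \<in> paths h N" "\<eta> N = h" "even h" "x \<le> N"
  shows "lowest h N x \<le> \<eta> x"
proof -
  have "\<bar>\<eta> x - \<eta> 0\<bar> \<le> int x - 0" using paths_lipschitz[OF assms(1), of 0 x] assms(4) by simp
  then have 1: "h - int x \<le> \<eta> x" using assms(1) unfolding paths_def by auto
  have "\<bar>\<eta> N - \<eta> x\<bar> \<le> int N - int x" using paths_lipschitz[OF assms(1) assms(4)] by simp
  then have 2: "h - int N + int x \<le> \<eta> x" using assms(2) by auto
  have nn: "\<eta> x \<ge> 0" using paths_nonneg[OF assms(1,4)] .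
  have "even (\<eta> x - h - int x)" using paths_parity[OF assms(1,4)] .
  then have "even (\<eta> x - int x)" using assms(3) by (metis diff_diff_eq2 even_add diff_conv_add_uminus even_minus add.commute)
  then have 3: "int (x mod 2) \<le> \<eta> x" using nn
    by (cases "even x") (auto simp: odd_iff_mod_2_eq_one[symmetric], presburger)
  show ?thesis unfolding lowest_def using 1 2 3 by simp
qed

lemma lowest_parity:
  assumes "even h" "even N"
  shows "even (lowest h N x - int x)"
proof -
  have a: "even (h - int x - int x)" using assms by presburger
  have b: "even (h - int N + int x - int x)" using assms by simp
  have c: "even (int (x mod 2) - int x)" by presburger
  show ?thesis unfolding lowest_def
    using a b c by (auto simp: max_def)
qed

lemma lowest_Suc_le: "lowest h N (Suc x) \<le> lowest h N x + 1"
  unfolding lowest_def by (auto simp: max_def mod_Suc)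

lemma lowest_le_Suc: "lowest h N x \<le> lowest h N (Suc x) + 1"
  unfolding lowest_def by (auto simp: max_def mod_Suc)

lemma lowest_nonneg: "lowest h N x \<ge> 0"
  unfolding lowest_def by simp

lemma lowest_0: "h \<ge> 0 \<Longrightarrow> lowest h N 0 = h"
  unfolding lowest_def by simp

lemma lowest_end: "h \<ge> 0 \<Longrightarrow> even N \<Longrightarrow> lowest h N N = h"
  unfolding lowest_def by auto

definition peak :: "nat \<Rightarrow> path \<Rightarrow> nat \<Rightarrow> bool" where
  "peak N \<eta> x \<longleftrightarrow> 1 \<le> x \<and> x < N \<and> \<eta> (x-1) = \<eta> x - 1 \<and> \<eta> (Suc x) = \<eta> x - 1 \<and> \<eta> x \<ge> 2"

text \<open>Among the points where \<open>\<eta>\<close> exceeds \<open>lowest\<close> the most, one where \<open>\<eta>\<close> itself is highest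
  is a peak; by parity the excess there is at least 2.\<close>

lemma peak_above_lowest:
  assumes \<eta>: "\<eta> \<in> paths h N" "\<eta> N = h" and ev: "even h" "even N" and h: "h \<ge> 0"
    and ne: "\<exists>x\<le>N. \<eta> x \<noteq> lowest h N x"
  shows "\<exists>x. peak N \<eta> x"
proof -
  define d where "d x = \<eta> x - lowest h N x" for x
  have dnn: "x \<le> N \<Longrightarrow> d x \<ge> 0" for x unfolding d_def using lowest_le[OF \<eta> ev(1)] by auto
  define Dm where "Dm = Max (d ` {..N})"
  have Dmax: "x \<le> N \<Longrightarrow> d x \<le> Dm" for x unfolding Dm_def by (rule Max_ge) auto
  obtain x1 where x1: "x1 \<le> N" "\<eta> x1 \<noteq> lowest h N x1" using ne by blast
  have Dpos: "Dm > 0" using Dmax[OF x1(1)] dnn[OF x1(1)] x1(2) unfolding d_def by auto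
  define SD where "SD = {x. x \<le> N \<and> d x = Dm}"
  have SDfin: "finite SD" unfolding SD_def by (rule finite_subset[of _ "{..N}"]) auto
  have "Dm \<in> d ` {..N}" unfolding Dm_def by (rule Max_in) auto
  then have SDne: "SD \<noteq> {}" unfolding SD_def by auto
  define v where "v = Max (\<eta> ` SD)"
  have "v \<in> \<eta> ` SD" unfolding v_def using SDfin SDne by (intro Max_in) auto
  then obtain x0 where x0: "x0 \<in> SD" "\<eta> x0 = v" by auto
  have vmax: "y \<in> SD \<Longrightarrow> \<eta> y \<le> v" for y unfolding v_def using SDfin by (intro Max_ge) auto
  have x0N: "x0 \<le> N" and dx0: "d x0 = Dm" using x0 unfolding SD_def by auto
  have "d 0 = 0" using \<eta>(1) lowest_0[OF h] unfolding d_def paths_def by simp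
  moreover have "d N = 0" using \<eta>(2) lowest_end[OF h ev(2)] unfolding d_def by simp
  ultimately have "x0 \<noteq> 0" "x0 \<noteq> N" using dx0 Dpos by (metis less_irrefl)+
  then have x0r: "1 \<le> x0" "x0 < N" using x0N by auto
  have sx: "Suc (x0-1) = x0" using x0r by simp
  have steps: "\<bar>\<eta> (Suc x0) - \<eta> x0\<bar> = 1" "\<bar>\<eta> x0 - \<eta> (x0-1)\<bar> = 1"
    using \<eta>(1) x0r sx unfolding paths_def by (auto dest: spec[of _ "x0-1"])
  have r: "\<eta> (Suc x0) = \<eta> x0 - 1"
  proof (rule ccontr)
    assume "\<eta> (Suc x0) \<noteq> \<eta> x0 - 1"
    then have up: "\<eta> (Suc x0) = \<eta> x0 + 1" using steps by auto
    have "d (Suc x0) \<ge> Dm" using up lowest_Suc_le[of h N x0] dx0 unfolding d_def by auto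
    then have "Suc x0 \<in> SD" using Dmax[of "Suc x0"] x0r unfolding SD_def by auto
    then show False using vmax up x0(2) by fastforce
  qed
  have l: "\<eta> (x0-1) = \<eta> x0 - 1"
  proof (rule ccontr)
    assume "\<eta> (x0-1) \<noteq> \<eta> x0 - 1"
    then have up: "\<eta> (x0-1) = \<eta> x0 + 1" using steps by auto
    have "d (x0-1) \<ge> Dm" using up lowest_le_Suc[of h N "x0-1"] dx0 sx unfolding d_def by auto
    then have "x0-1 \<in> SD" using Dmax[of "x0-1"] x0r unfolding SD_def by auto
    then show False using vmax up x0(2) by fastforce
  qed
  have "even (\<eta> x0 - h - int x0)" using paths_parity[OF \<eta>(1) x0N] .
  moreover have "even (lowest h N x0 - int x0)" using lowest_parity[OF ev] .
  ultimately have "even Dm" using dx0 ev(1) unfolding d_def by presburger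
  then have "\<eta> x0 \<ge> 2" using Dpos dx0 lowest_nonneg[of h N x0] unfolding d_def by presburger
  then show ?thesis using x0r l r unfolding peak_def by blast
qed

definition area :: "nat \<Rightarrow> path \<Rightarrow> int" where
  "area N \<eta> = (\<Sum>x\<in>{..N}. \<eta> x)"

lemma area_bounds:
  assumes "\<eta> \<in> paths h N"
  shows "0 \<le> area N \<eta>" "area N \<eta> \<le> int (N+1) * (h + int N)"
proof -
  show "0 \<le> area N \<eta>" unfolding area_def using paths_nonneg[OF assms] by (intro sum_nonneg) auto
  have "area N \<eta> \<le> (\<Sum>x\<in>{..N}. h + int N)" unfolding area_def
    by (rule sum_mono) (use paths_le[OF assms] in force)
  then show "area N \<eta> \<le> int (N+1) * (h + int N)" by simp
qed

lemma flip_peak: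
  assumes \<eta>: "\<eta> \<in> paths h N" "\<eta> N = h" and pk: "peak N \<eta> x"
  shows "flip \<eta> x \<in> paths h N" "flip \<eta> x N = h" "area N (flip \<eta> x) = area N \<eta> - 2"
proof -
  have x: "1 \<le> x" "x < N" and nb: "\<eta> (x-1) = \<eta> x - 1" "\<eta> (Suc x) = \<eta> x - 1" "\<eta> x \<ge> 2"
    using pk unfolding peak_def by auto
  have fl: "flip \<eta> x = \<eta>(x := \<eta> x - 2)" unfolding flip_def using nb by simp
  show "flip \<eta> x N = h" using fl x \<eta>(2) by simp
  have "\<bar>(\<eta>(x := \<eta> x - 2)) (Suc y) - (\<eta>(x := \<eta> x - 2)) y\<bar> = 1" if y: "y < N" for y
  proof -
    consider "Suc y = x" | "y = x" | "Suc y \<noteq> x \<and> y \<noteq> x" by blast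
    then show ?thesis
    proof cases
      case 1 then show ?thesis using nb by (auto simp: diff_Suc_1[symmetric] simp del: diff_Suc_1)
    next
      case 2 then show ?thesis using nb by auto
    next
      case 3 then show ?thesis using \<eta>(1) y unfolding paths_def by auto
    qed
  qed
  then show "flip \<eta> x \<in> paths h N" using \<eta>(1) nb x unfolding fl paths_def by auto
  have "area N (\<eta>(x := \<eta> x - 2)) = area N \<eta> - 2"
    unfolding area_def using x by (simp add: sum.remove[of "{..N}" x] fun_upd_def)
  then show "area N (flip \<eta> x) = area N \<eta> - 2" using fl by simp
qed

lemma rate_peak_ge:
  assumes "peak N \<eta> x" "lam > 0"
  shows "rate lam \<eta> x \<ge> min (1/2) (lam/(lam+1))"
proof -
  have nb: "\<eta> (x-1) = \<eta> x - 1" "\<eta> (Suc x) = \<eta> x - 1" "\<eta> x \<ge> 2" and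
    fl: "flip \<eta> x x = \<eta> x - 2" using assms(1) unfolding peak_def flip_def by auto
  show ?thesis
  proof (cases "\<eta> x \<ge> 3")
    case True
    then show ?thesis using fl min.cobounded1[of "1/2::real" "lam/(lam+1)"] unfolding rate_def by auto
  next
    case False
    then have "\<eta> x = 2" using nb by simp
    then show ?thesis using nb fl unfolding rate_def by auto
  qed
qed

lemma flip_increment_le:
  assumes fin: "finite (states a N)" and Z: "Zpart lam a N > 0" and lam: "lam \<ge> 1"
    and \<eta>: "\<eta> \<in> states a N" and x: "x \<in> {1..N-1}"
  shows "rate lam \<eta> x * (f (flip \<eta> x) - f \<eta>)^2 \<le> 2 * Zpart lam a N * dirichlet lam a N f"
proof -
  let ?Z = "Zpart lam a N" and ?T = "rate lam \<eta> x * (f (flip \<eta> x) - f \<eta>)^2"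
  have T0: "?T \<ge> 0" using rate_nonneg[of lam \<eta> x] lam by simp
  have pi: "pi_meas lam a N \<eta> \<ge> 1 / ?Z" unfolding pi_meas_def using Z lam
    by (intro divide_right_mono one_le_power) auto
  have "?T / ?Z = (1 / ?Z) * ?T" by simp
  also have "\<dots> \<le> pi_meas lam a N \<eta> * ?T" by (rule mult_right_mono[OF pi T0])
  also have "\<dots> \<le> 2 * dirichlet lam a N f"
    using dirichlet_term_le[OF fin Z _ \<eta> x, of f] lam by simp
  finally show ?thesis using Z by (simp add: divide_le_eq mult.commute mult.left_commute)
qed

text \<open>Peak flips lower the area by 2 and lead to the lowest path; this canonical path bounds the
  oscillation of \<open>f\<close> on the state space.\<close>

lemma dist_lowest_le:
  fixes a s :: real and N :: nat and f :: "path \<Rightarrow> real"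
  defines "h \<equiv> even_ceil (a * real N)"
  assumes h: "h \<ge> 0" and N: "even N" and s: "s \<ge> 0"
    and step: "\<And>\<eta> x. \<eta> \<in> states a N \<Longrightarrow> peak N \<eta> x \<Longrightarrow> \<bar>f (flip \<eta> x) - f \<eta>\<bar> \<le> s"
    and \<eta>: "\<eta> \<in> states a N"
  shows "\<bar>f \<eta> - f (\<lambda>x. if x \<le> N then lowest h N x else 0)\<bar> \<le> area N \<eta> * s"
proof -
  let ?S = "states a N" and ?low = "\<lambda>x. if x \<le> N then lowest h N x else 0"
  have S_eq: "\<xi> \<in> ?S \<longleftrightarrow> \<xi> \<in> paths h N \<and> \<xi> N = h" for \<xi> unfolding states_eq_paths h_def by auto
  have evh: "even h" unfolding h_def even_ceil_def by simp
  have "\<bar>f \<xi> - f ?low\<bar> \<le> real n * s" if "\<xi> \<in> ?S" "nat (area N \<xi>) = n" for \<xi> n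
    using that
  proof (induction n arbitrary: \<xi> rule: less_induct)
    case (less n)
    have \<xi>: "\<xi> \<in> paths h N" "\<xi> N = h" using less.prems S_eq by auto
    show ?case
    proof (cases "\<exists>x\<le>N. \<xi> x \<noteq> lowest h N x")
      case False
      then have "\<xi> = ?low" using \<xi>(1) unfolding paths_def by (auto simp: fun_eq_iff)
      then show ?thesis using s by simp
    next
      case True
      then obtain x where pk: "peak N \<xi> x" using peak_above_lowest[OF \<xi> evh N h] by blast
      let ?\<xi> = "flip \<xi> x"
      have fl: "?\<xi> \<in> ?S" "area N ?\<xi> = area N \<xi> - 2"
        using flip_peak[OF \<xi> pk] S_eq by auto
      have n: "n = nat (area N ?\<xi>) + 2" using less.prems fl(2) area_bounds(1)[of ?\<xi> h N] fl(1) S_eq by auto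
      have "\<bar>f \<xi> - f ?low\<bar> \<le> \<bar>f ?\<xi> - f \<xi>\<bar> + \<bar>f ?\<xi> - f ?low\<bar>" by linarith
      also have "\<dots> \<le> s + real (nat (area N ?\<xi>)) * s"
        using step[OF less.prems(1) pk] less.IH[OF _ fl(1) refl] n by (intro add_mono) auto
      also have "\<dots> \<le> real n * s" using n s by (simp add: algebra_simps)
      finally show ?thesis .
    qed
  qed
  then show ?thesis using \<eta> area_bounds(1)[of \<eta> h N] S_eq by force
qed

text \<open>A crude Poincare inequality; its only role is to make the spectral gap positive.\<close>

lemma variance_le_dirichlet:
  fixes lam a :: real and N :: nat and f :: "path \<Rightarrow> real"
  defines "h \<equiv> even_ceil (a * real N)"
  assumes h: "h \<ge> 0" and N: "even N" and lam: "lam > 1" and Z: "Zpart lam a N > 0"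
  shows "variance lam a N f \<le>
    (real (N+1) * (h + real N))^2 * (2 * Zpart lam a N / min (1/2) (lam/(lam+1))) * dirichlet lam a N f"
proof -
  let ?S = "states a N" and ?Z = "Zpart lam a N" and ?D = "dirichlet lam a N f"
  let ?low = "\<lambda>x. if x \<le> N then lowest h N x else 0"
  define r0 where "r0 = min (1/2) (lam/(lam+1))"
  define s where "s = sqrt (2 * ?Z * ?D / r0)"
  define P where "P = real (N+1) * (h + real N)"
  have r0: "r0 > 0" unfolding r0_def using lam by simp
  have fin: "finite ?S" using finite_states h unfolding h_def by auto
  have D0: "?D \<ge> 0" using dirichlet_nonneg[OF Z] lam by simp
  have s0: "s \<ge> 0" unfolding s_def using D0 Z r0 by simp
  have step: "\<bar>f (flip \<eta> x) - f \<eta>\<bar> \<le> s" if \<eta>: "\<eta> \<in> ?S" and pk: "peak N \<eta> x" for \<eta> x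
  proof -
    have "r0 \<le> rate lam \<eta> x" unfolding r0_def by (rule rate_peak_ge[OF pk]) (use lam in simp)
    then have "r0 * (f (flip \<eta> x) - f \<eta>)^2 \<le> rate lam \<eta> x * (f (flip \<eta> x) - f \<eta>)^2"
      by (rule mult_right_mono) simp
    also have "\<dots> \<le> 2 * ?Z * ?D"
      by (rule flip_increment_le[OF fin Z _ \<eta>]) (use lam pk in \<open>auto simp: peak_def\<close>)
    finally have "(f (flip \<eta> x) - f \<eta>)^2 \<le> 2 * ?Z * ?D / r0" using r0 by (simp add: field_simps)
    then have "sqrt ((f (flip \<eta> x) - f \<eta>)^2) \<le> s" unfolding s_def by (rule real_sqrt_le_mono)
    then show ?thesis by simp
  qed
  have bnd: "\<bar>f \<eta> - f ?low\<bar> \<le> P * s" if \<eta>: "\<eta> \<in> ?S" for \<eta>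
  proof -
    have "\<eta> \<in> paths h N" using \<eta> unfolding states_eq_paths h_def by auto
    then have "real_of_int (area N \<eta>) \<le> real_of_int (int (N+1) * (h + int N))"
      using area_bounds(2) by (simp only: of_int_le_iff)
    then have "real_of_int (area N \<eta>) * s \<le> P * s" unfolding P_def using s0 by (intro mult_right_mono) auto
    moreover have "\<bar>f \<eta> - f ?low\<bar> \<le> real_of_int (area N \<eta>) * s"
      using dist_lowest_le[OF h[unfolded h_def] N s0 step \<eta>] unfolding h_def .
    ultimately show ?thesis by linarith
  qed
  have "variance lam a N f \<le> (\<Sum>\<eta>\<in>?S. pi_meas lam a N \<eta> * (f \<eta> - f ?low)^2)"
    by (rule variance_le_moment[OF fin Z])
  also have "\<dots> \<le> (\<Sum>\<eta>\<in>?S. pi_meas lam a N \<eta> * (P * s)^2)"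
  proof (intro sum_mono mult_left_mono)
    fix \<eta> assume "\<eta> \<in> ?S"
    then have "\<bar>f \<eta> - f ?low\<bar>^2 \<le> (P * s)^2" using bnd by (intro power_mono) auto
    then show "(f \<eta> - f ?low)^2 \<le> (P * s)^2" by simp
    show "pi_meas lam a N \<eta> \<ge> 0" using pi_meas_nonneg[OF _ Z] lam by simp
  qed
  also have "\<dots> = (P * s)^2" using sum_pi_meas[OF Z] by (simp add: sum_distrib_right[symmetric])
  also have "\<dots> = P^2 * (2 * ?Z / r0) * ?D" unfolding s_def using D0 Z r0 by (simp add: power_mult_distrib)
  finally show ?thesis unfolding P_def r0_def .
qed

lemma Trel_ge_variance_div_dirichlet:
  fixes lam a :: real and N :: nat
  assumes h: "even_ceil (a * real N) \<ge> 0" and N: "even N" "N \<ge> 1" and lam: "lam > 1"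
    and Z: "Zpart lam a N > 0" and V: "variance lam a N f > 0"
  shows "dirichlet lam a N f > 0" "Trel lam a N \<ge> variance lam a N f / dirichlet lam a N f"
proof -
  let ?R = "{dirichlet lam a N g / variance lam a N g | g. variance lam a N g \<noteq> 0}"
  define K where "K = (real (N+1) * (even_ceil (a * real N) + real N))^2 * (2 * Zpart lam a N / min (1/2) (lam/(lam+1)))"
  have K: "K > 0" unfolding K_def using h N Z lam by (intro mult_pos_pos) auto
  have fin: "finite (states a N)" using finite_states h by auto
  have lb: "y \<ge> 1/K" if "y \<in> ?R" for y
  proof -
    obtain g where y: "y = dirichlet lam a N g / variance lam a N g" and v: "variance lam a N g \<noteq> 0"
      using \<open>y \<in> ?R\<close> by blast
    have "variance lam a N g > 0" using variance_nonneg[OF fin Z, of g] v lam by simp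
    moreover have "variance lam a N g \<le> K * dirichlet lam a N g"
      unfolding K_def using variance_le_dirichlet[OF h N(1) lam Z] by simp
    ultimately show ?thesis unfolding y using K by (simp add: field_simps)
  qed
  have f: "dirichlet lam a N f / variance lam a N f \<in> ?R" using V by force
  have gap: "spectral_gap lam a N \<ge> 1/K"
    unfolding spectral_gap_def by (rule cInf_greatest) (use f lb in auto)
  have "bdd_below ?R" using lb by (meson bdd_below.I)
  then have "spectral_gap lam a N \<le> dirichlet lam a N f / variance lam a N f"
    unfolding spectral_gap_def using f by (rule cInf_lower[rotated])
  moreover have gap0: "spectral_gap lam a N > 0" using gap K by (meson less_le_trans zero_less_divide_1_iff)
  ultimately have "dirichlet lam a N f / variance lam a N f > 0" by linarith
  then show D: "dirichlet lam a N f > 0" using V by (simp add: zero_less_divide_iff)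
  have "1 / (dirichlet lam a N f / variance lam a N f) \<le> 1 / spectral_gap lam a N"
    by (rule divide_left_mono[OF \<open>spectral_gap lam a N \<le> _\<close>]) (use gap0 D V in auto)
  then show "Trel lam a N \<ge> variance lam a N f / dirichlet lam a N f" unfolding Trel_def by simp
qed

definition zero_indicator :: "nat \<Rightarrow> path \<Rightarrow> real" where
  "zero_indicator N \<xi> = (if H N \<xi> > 0 then 1 else 0)"

lemma flip_other: "y \<noteq> x \<Longrightarrow> flip \<eta> x y = \<eta> y"
  unfolding flip_def by simp

text \<open>A single flip creates or destroys a contact with 0 only at \<open>x\<close>, so \<open>\<eta>\<close> is then within
  distance 1 of the wall and has at most one contact.\<close>

lemma zero_indicator_flip_changed:
  assumes \<eta>: "\<eta> \<in> states a N" and x: "1 \<le> x" "x < N"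
    and ch: "zero_indicator N (flip \<eta> x) \<noteq> zero_indicator N \<eta>"
  shows "\<exists>t\<le>N. \<eta> t \<le> 1" "H N \<eta> \<le> 1"
proof -
  have st: "\<forall>y<N. \<bar>\<eta> (Suc y) - \<eta> y\<bar> = 1" "\<forall>y\<le>N. \<eta> y \<ge> 0" using \<eta> unfolding states_def by auto
  consider (gain) "H N \<eta> = 0" "H N (flip \<eta> x) > 0" | (loss) "H N \<eta> > 0" "H N (flip \<eta> x) = 0"
    using ch unfolding zero_indicator_def by (auto split: if_splits)
  then have "(\<exists>t\<le>N. \<eta> t \<le> 1) \<and> H N \<eta> \<le> 1"
  proof cases
    case gain
    then have nz: "\<forall>y\<le>N. \<eta> y \<noteq> 0" using H_pos_iff[of N \<eta>] by auto
    obtain y where y: "y \<le> N" "flip \<eta> x y = 0" using gain(2) H_pos_iff by blast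
    then have "y = x" using nz flip_other[of y x \<eta>] by fastforce
    then have e: "\<eta> (Suc x) + \<eta> (x - 1) - \<eta> x = 0" using y unfolding flip_def by simp
    have "\<bar>\<eta> (Suc (x-1)) - \<eta> (x-1)\<bar> = 1" using st x by (metis less_imp_diff_less)
    then have "\<bar>\<eta> x - \<eta> (x-1)\<bar> = 1" using x by simp
    moreover have "\<eta> (Suc x) \<ge> 0" using st x by auto
    ultimately have "\<eta> (Suc x) = 1" using e by auto
    then show ?thesis using gain x by (intro conjI exI[of _ "Suc x"]) auto
  next
    case loss
    then have nz: "\<forall>y\<le>N. flip \<eta> x y \<noteq> 0" using H_pos_iff[of N "flip \<eta> x"] by auto
    have "{y. y \<le> N \<and> \<eta> y = 0} \<subseteq> {x}" using nz flip_other[of _ x \<eta>] by fastforce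
    then have "H N \<eta> \<le> card {x}" unfolding H_def by (intro card_mono) auto
    moreover obtain y where "y \<le> N" "\<eta> y = 0" using loss H_pos_iff by blast
    ultimately show ?thesis by auto
  qed
  then show "\<exists>t\<le>N. \<eta> t \<le> 1" "H N \<eta> \<le> 1" by auto
qed

lemma dirichlet_term_zero_indicator_le:
  fixes lam a :: real
  assumes \<eta>: "\<eta> \<in> states a N" and x: "x \<in> {1..N-1}" and lam: "lam > 1" and Z: "Zpart lam a N > 0"
  shows "pi_meas lam a N \<eta> * (rate lam \<eta> x * (zero_indicator N (flip \<eta> x) - zero_indicator N \<eta>)^2)
     \<le> (if \<exists>t\<le>N. \<eta> t \<le> 1 then lam / Zpart lam a N else 0)"
proof (cases "zero_indicator N (flip \<eta> x) = zero_indicator N \<eta>")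
  case True
  then show ?thesis using lam Z by auto
next
  case False
  have pin: "pi_meas lam a N \<eta> \<ge> 0" using pi_meas_nonneg[OF _ Z] lam by simp
  have sq: "(zero_indicator N (flip \<eta> x) - zero_indicator N \<eta>)^2 = 1"
    using False unfolding zero_indicator_def by (auto split: if_splits)
  have ex: "\<exists>t\<le>N. \<eta> t \<le> 1" and H1: "H N \<eta> \<le> 1"
    using zero_indicator_flip_changed[OF \<eta> _ _ False] x by auto
  have "pi_meas lam a N \<eta> * (rate lam \<eta> x * 1) \<le> pi_meas lam a N \<eta>"
    using rate_le_1[of lam] lam pin by (simp add: mult_left_le)
  also have "\<dots> \<le> lam / Zpart lam a N"
    unfolding pi_meas_def using Z lam power_increasing[OF H1, of lam] by (simp add: divide_right_mono)
  finally show ?thesis using ex sq by simp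
qed

lemma Zpart_split:
  assumes "finite (states a N)"
  shows "Zpart lam a N = (\<Sum>\<eta>\<in>{\<eta>\<in>states a N. H N \<eta> > 0}. lam ^ H N \<eta>) + card {\<eta>\<in>states a N. H N \<eta> = 0}"
proof -
  have "Zpart lam a N = (\<Sum>\<eta>\<in>states a N. if H N \<eta> > 0 then lam ^ H N \<eta> else 0)
      + (\<Sum>\<eta>\<in>states a N. if H N \<eta> = 0 then 1 else 0)"
    unfolding Zpart_def sum.distrib[symmetric] by (rule sum.cong) auto
  then show ?thesis using assms by (simp add: sum.If_cases Int_def)
qed

lemma variance_zero_indicator:
  assumes fin: "finite (states a N)" and Z: "Zpart lam a N > 0"
  shows "variance lam a N (zero_indicator N) =
    (\<Sum>\<eta>\<in>{\<eta>\<in>states a N. H N \<eta> > 0}. lam ^ H N \<eta>) * card {\<eta>\<in>states a N. H N \<eta> = 0} / (Zpart lam a N)^2"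
proof -
  let ?S = "states a N" and ?Z = "Zpart lam a N"
  let ?ZA = "\<Sum>\<eta>\<in>{\<eta>\<in>?S. H N \<eta> > 0}. lam ^ H N \<eta>"
  have mean: "(\<Sum>\<eta>\<in>?S. pi_meas lam a N \<eta> * zero_indicator N \<eta>) = ?ZA / ?Z"
  proof -
    have "(\<Sum>\<eta>\<in>?S. pi_meas lam a N \<eta> * zero_indicator N \<eta>) =
        (\<Sum>\<eta>\<in>?S. if H N \<eta> > 0 then lam ^ H N \<eta> / ?Z else 0)"
      unfolding zero_indicator_def pi_meas_def by (rule sum.cong) auto
    also have "\<dots> = ?ZA / ?Z" using fin by (simp add: sum.If_cases Int_def sum_divide_distrib)
    finally show ?thesis .
  qed
  have "(\<Sum>\<eta>\<in>?S. pi_meas lam a N \<eta> * (zero_indicator N \<eta>)^2) = ?ZA / ?Z"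
    unfolding mean[symmetric] by (rule sum.cong) (auto simp: zero_indicator_def)
  moreover have "?ZA / ?Z - (?ZA / ?Z)^2 = ?ZA * (?Z - ?ZA) / ?Z^2"
    using Z by (simp add: field_simps power2_eq_square)
  ultimately show ?thesis unfolding variance_def mean using Zpart_split[OF fin, of lam] by simp
qed

lemma dirichlet_zero_indicator_le:
  fixes lam a :: real
  assumes fin: "finite (states a N)" and lam: "lam > 1" and Z: "Zpart lam a N > 0"
  shows "dirichlet lam a N (zero_indicator N) \<le> real N * lam * card {\<eta>\<in>states a N. \<exists>t\<le>N. \<eta> t \<le> 1} / Zpart lam a N"
proof -
  let ?M = "real (card {\<eta>\<in>states a N. \<exists>t\<le>N. \<eta> t \<le> 1})"
  let ?T = "\<lambda>\<eta>. (if \<exists>t\<le>N. \<eta> t \<le> 1 then lam / Zpart lam a N else 0)"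
  have "dirichlet lam a N (zero_indicator N) = (1/2) * (\<Sum>\<eta>\<in>states a N. \<Sum>x\<in>{1..N-1}.
      pi_meas lam a N \<eta> * (rate lam \<eta> x * (zero_indicator N (flip \<eta> x) - zero_indicator N \<eta>)^2))"
    unfolding dirichlet_def by (simp add: sum_distrib_left)
  also have "\<dots> \<le> (1/2) * (\<Sum>\<eta>\<in>states a N. \<Sum>x\<in>{1..N-1}. ?T \<eta>)"
    by (intro mult_left_mono sum_mono dirichlet_term_zero_indicator_le[OF _ _ lam Z]) auto
  also have "\<dots> = (1/2) * real (N-1) * (lam / Zpart lam a N * ?M)"
    using fin by (simp add: sum_distrib_left[symmetric] sum.If_cases Int_def)
  also have "\<dots> \<le> real N * (lam / Zpart lam a N * ?M)"
    using lam Z by (intro mult_right_mono) auto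
  finally show ?thesis by simp
qed

lemma Trel_ge_partition_bound:
  fixes lam a :: real and N :: nat
  defines "ZA \<equiv> (\<Sum>\<eta>\<in>{\<eta>\<in>states a N. H N \<eta> > 0}. lam ^ H N \<eta>)"
  defines "ZB \<equiv> real (card {\<eta>\<in>states a N. H N \<eta> = 0})"
  defines "Mc \<equiv> real (card {\<eta>\<in>states a N. \<exists>t\<le>N. \<eta> t \<le> 1})"
  assumes h: "even_ceil (a * real N) \<ge> 0" and N: "even N" "N \<ge> 1" and lam: "lam > 1"
    and ZA: "ZA > 0" and ZB: "ZB > 0"
  shows "Mc > 0" "Trel lam a N \<ge> min ZA ZB / (2 * (real N * lam * Mc))"
proof -
  let ?f = "zero_indicator N"
  have fin: "finite (states a N)" using finite_states h by auto
  have Zeq: "Zpart lam a N = ZA + ZB" unfolding ZA_def ZB_def by (rule Zpart_split[OF fin])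
  have Z: "Zpart lam a N > 0" using Zeq ZA ZB by simp
  have V: "variance lam a N ?f = ZA * ZB / (Zpart lam a N)^2"
    unfolding ZA_def ZB_def by (rule variance_zero_indicator[OF fin Z])
  have Vp: "variance lam a N ?f > 0" unfolding V using ZA ZB Z by simp
  have Dp: "dirichlet lam a N ?f > 0" and TV: "Trel lam a N \<ge> variance lam a N ?f / dirichlet lam a N ?f"
    using Trel_ge_variance_div_dirichlet[OF h N(1,2) lam Z Vp] by auto
  have Dle: "dirichlet lam a N ?f \<le> real N * lam * Mc / Zpart lam a N"
    unfolding Mc_def by (rule dirichlet_zero_indicator_le[OF fin lam Z])
  have "real N * lam * Mc / Zpart lam a N > 0" using Dp Dle by linarith
  then have NM: "real N * lam * Mc > 0" using Z by (simp add: zero_less_divide_iff)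
  moreover have "real N * lam > 0" using N lam by simp
  ultimately show "Mc > 0" by (metis zero_less_mult_pos)
  have half: "min ZA ZB / 2 \<le> ZA * ZB / Zpart lam a N"
    unfolding Zeq using ZA ZB by (simp add: field_simps min_def)
  have "min ZA ZB / (2 * (real N * lam * Mc)) \<le> (ZA * ZB / Zpart lam a N) / (real N * lam * Mc)"
    using divide_right_mono[OF half less_imp_le[OF NM]] by (simp add: divide_divide_eq_left)
  also have "\<dots> = variance lam a N ?f / (real N * lam * Mc / Zpart lam a N)"
    unfolding V using Z by (simp add: field_simps power2_eq_square)
  also have "\<dots> \<le> variance lam a N ?f / dirichlet lam a N ?f"
    by (rule divide_left_mono[OF Dle]) (use Vp Dp NM Z in auto)
  finally show "Trel lam a N \<ge> min ZA ZB / (2 * (real N * lam * Mc))" using TV by linarith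
qed

text \<open>For \<open>x > 2\<close> this is \<open>Ffree x - a * ln (x - 1)\<close>, whose sign separates the two regimes of
  \<open>E_rate\<close>; note \<open>(1 + d_lam x) / (1 - d_lam x) = x - 1\<close>.\<close>

definition Ffree_excess :: "real \<Rightarrow> real \<Rightarrow> real" where
  "Ffree_excess a x = ln x - ln 2 - (1/2 + a) * ln (x - 1)"

definition lambda_min :: "real \<Rightarrow> real" where
  "lambda_min a = 2 / (1 - 2*a)"

lemma Ffree_eq: "x > 2 \<Longrightarrow> Ffree x = ln x - ln 2 - (1/2) * ln (x - 1)"
  unfolding Ffree_def by (simp add: ln_div ln_mult ln_sqrt)

lemma Ffree_excess_deriv: "x > 1 \<Longrightarrow> DERIV (Ffree_excess a) x :> (1/x - (1/2 + a) / (x - 1))"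
  unfolding Ffree_excess_def by (auto intro!: derivative_eq_intros simp: field_simps)

lemma continuous_on_Ffree_excess: "1 < u \<Longrightarrow> continuous_on {u..v} (Ffree_excess a)"
  unfolding Ffree_excess_def by (intro continuous_intros) auto

context
  fixes a :: real
  assumes a: "0 < a" "a < 1/2"
begin

lemma lambda_min_gt_2: "lambda_min a > 2"
  unfolding lambda_min_def using a by (simp add: field_simps)

lemma lambda_min_mult: "lambda_min a * (1/2 - a) = 1"
  unfolding lambda_min_def using a by (simp add: field_simps)

lemma Ffree_excess_neg:
  assumes "2 < x" "x \<le> lambda_min a"
  shows "Ffree_excess a x < 0"
proof -
  have "Ffree_excess a 2 > Ffree_excess a x"
  proof (rule DERIV_neg_imp_decreasing_open[OF assms(1)])
    fix y assume y: "2 < y" "y < x"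
    have "y * (1/2 - a) < lambda_min a * (1/2 - a)" using y assms(2) a by (intro mult_strict_right_mono) auto
    then have "y - 1 < (1/2 + a) * y" unfolding lambda_min_mult by (simp add: algebra_simps)
    then have "1/y - (1/2 + a) / (y - 1) < 0" using y by (simp add: field_simps)
    then show "\<exists>z. DERIV (Ffree_excess a) y :> z \<and> z < 0" using Ffree_excess_deriv[of y a] y by auto
  qed (rule continuous_on_Ffree_excess, simp)
  then show ?thesis unfolding Ffree_excess_def by simp
qed

lemma Ffree_excess_strict_mono:
  assumes "lambda_min a \<le> x" "x < y"
  shows "Ffree_excess a x < Ffree_excess a y"
proof (rule DERIV_pos_imp_increasing_open[OF assms(2)])
  fix z assume z: "x < z" "z < y"
  have "z * (1/2 - a) > lambda_min a * (1/2 - a)" using z assms(1) a by (intro mult_strict_right_mono) auto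
  then have "z - 1 > (1/2 + a) * z" unfolding lambda_min_mult by (simp add: algebra_simps)
  then have "1/z - (1/2 + a) / (z - 1) > 0" using z assms lambda_min_gt_2 by (simp add: field_simps)
  then show "\<exists>w. DERIV (Ffree_excess a) z :> w \<and> w > 0"
    using Ffree_excess_deriv[of z a] z assms lambda_min_gt_2 by auto
next
  show "continuous_on {x..y} (Ffree_excess a)"
    by (rule continuous_on_Ffree_excess) (use assms lambda_min_gt_2 in simp)
qed

lemma Ffree_excess_pos_exists: "\<exists>y \<ge> lambda_min a. Ffree_excess a y > 0"
proof -
  define y where "y = max (lambda_min a + 1) (exp (2 * ln 2 / (1 - 2*a)))"
  have y2: "y > 2" unfolding y_def using lambda_min_gt_2 by simp
  have "2 * ln 2 / (1 - 2*a) \<le> ln y"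
    using y2 ln_le_cancel_iff[of "exp (2 * ln 2 / (1 - 2*a))" y] unfolding y_def by simp
  then have "ln 2 \<le> (1/2 - a) * ln y" using a by (simp add: field_simps)
  moreover have "(1/2 + a) * ln (y - 1) < (1/2 + a) * ln y"
    using y2 a by (intro mult_strict_left_mono) auto
  ultimately have "Ffree_excess a y > 0" unfolding Ffree_excess_def by (simp add: algebra_simps)
  then show ?thesis unfolding y_def by (intro exI[of _ y]) (simp add: y_def)
qed

lemma lambda_c_root: "lambda_c a > lambda_min a" "Ffree_excess a (lambda_c a) = 0"
proof -
  have root_gt: "x > lambda_min a" if "x > 2" "Ffree_excess a x = 0" for x
    using Ffree_excess_neg[of x] that by force
  have eq: "(lam > 2 \<and> Ffree lam = a * ln (lam - 1)) \<longleftrightarrow> (lam > 2 \<and> Ffree_excess a lam = 0)" for lam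
    unfolding Ffree_excess_def using Ffree_eq[of lam] by (auto simp: algebra_simps)
  obtain y where y: "y \<ge> lambda_min a" "Ffree_excess a y > 0" using Ffree_excess_pos_exists by blast
  have "\<exists>x. lambda_min a \<le> x \<and> x \<le> y \<and> Ffree_excess a x = 0"
  proof (rule IVT')
    show "Ffree_excess a (lambda_min a) \<le> 0" using Ffree_excess_neg lambda_min_gt_2 by force
    show "continuous_on {lambda_min a..y} (Ffree_excess a)"
      by (rule continuous_on_Ffree_excess) (use lambda_min_gt_2 in simp)
  qed (use y in auto)
  then obtain x where "lambda_min a \<le> x" "Ffree_excess a x = 0" by blast
  then have x: "x > 2" "Ffree_excess a x = 0" using lambda_min_gt_2 by auto
  have "lambda_c a = x" unfolding lambda_c_def eq
  proof (rule the_equality)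
    fix z assume "z > 2 \<and> Ffree_excess a z = 0"
    then show "z = x" using root_gt x Ffree_excess_strict_mono
      by (metis less_imp_le linorder_neqE_linordered_idom order_less_irrefl)
  qed (use x in simp)
  then show "lambda_c a > lambda_min a" "Ffree_excess a (lambda_c a) = 0" using x root_gt by auto
qed

lemma E_rate_le:
  assumes lam: "lam > lambda_min a"
  shows "E_rate a lam \<le> min (Ffree_excess a lam) 0 + q (2*a)"
proof -
  have lam2: "lam > 2" using lam lambda_min_gt_2 by simp
  have d: "(1 + d_lam lam) / (1 - d_lam lam) = lam - 1" unfolding d_lam_def using lam2 by (simp add: field_simps)
  have F: "Ffree lam - a * ln ((1 + d_lam lam) / (1 - d_lam lam)) = Ffree_excess a lam"
    unfolding d Ffree_excess_def using Ffree_eq[OF lam2] by (simp add: algebra_simps)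
  show ?thesis
  proof (cases "lam \<le> lambda_c a")
    case True
    then have "Ffree_excess a lam \<le> 0"
      using Ffree_excess_strict_mono[of lam "lambda_c a"] lam lambda_c_root by force
    then show ?thesis unfolding E_rate_def using True F by simp
  next
    case False
    then have "Ffree_excess a lam > 0"
      using Ffree_excess_strict_mono[of "lambda_c a" lam] lambda_c_root by force
    then show ?thesis unfolding E_rate_def using False by simp
  qed
qed

end

lemma hitting_weight_ge:
  fixes lam r t :: real and h :: int
  assumes h: "h \<ge> 1" and lam: "lam > 1" and r: "r = 1 / sqrt (lam - 1)" and r1: "r \<le> 1"
    and t: "t \<ge> r"
  shows "(\<Sum>\<eta>\<in>{\<eta>\<in>paths h m. H m \<eta> > 0}. lam ^ H m \<eta>) \<ge> (r + 1/r)^m * r powr h - t powr h * (t + 1/t)^m"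
proof -
  let ?P = "paths h m" and ?\<phi> = "eigenfun lam r"
  have r0: "r > 0" using r lam by simp
  have t0: "t > 0" using t r0 by simp
  have lr: "lam = 1 + 1/r^2" using r lam by (simp add: power_divide)
  have fin: "finite ?P" using finite_paths h by simp
  have "(r + 1/r)^m * r powr h = (\<Sum>\<eta>\<in>?P. lam ^ H m \<eta> * ?\<phi> (\<eta> m))"
    using sum_paths_eigenfun[OF r0 lr h, of m] h by (simp add: eigenfun_def)
  also have "\<dots> = (\<Sum>\<eta>\<in>?P. if H m \<eta> > 0 then lam ^ H m \<eta> * ?\<phi> (\<eta> m) else 0)
      + (\<Sum>\<eta>\<in>?P. if H m \<eta> = 0 then r powr (\<eta> m) else 0)"
    unfolding sum.distrib[symmetric]
    by (rule sum.cong) (auto simp: eigenfun_def dest: H_eq_0_end_nonzero)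
  also have "\<dots> \<le> (\<Sum>\<eta>\<in>{\<eta>\<in>?P. H m \<eta> > 0}. lam ^ H m \<eta>)
      + (\<Sum>\<eta>\<in>?P. if H m \<eta> = 0 then t powr (\<eta> m) else 0)"
  proof (intro add_mono)
    have "?\<phi> j \<le> 1" if "j \<ge> 0" for j
      using powr_mono2[of "real_of_int j" r 1] that r0 r1 lam unfolding eigenfun_def by auto
    then show "(\<Sum>\<eta>\<in>?P. if H m \<eta> > 0 then lam ^ H m \<eta> * ?\<phi> (\<eta> m) else 0)
        \<le> (\<Sum>\<eta>\<in>{\<eta>\<in>?P. H m \<eta> > 0}. lam ^ H m \<eta>)"
      unfolding sum.inter_filter[OF fin, symmetric] using lam
      by (intro sum_mono) (auto simp: mult_left_le paths_nonneg)
    show "(\<Sum>\<eta>\<in>?P. if H m \<eta> = 0 then r powr (\<eta> m) else 0)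
        \<le> (\<Sum>\<eta>\<in>?P. if H m \<eta> = 0 then t powr (\<eta> m) else 0)"
      using t r0 by (intro sum_mono) (auto intro: powr_mono2 simp: paths_nonneg)
  qed
  also have "(\<Sum>\<eta>\<in>?P. if H m \<eta> = 0 then t powr (\<eta> m) else 0) \<le> t powr h * (t + 1/t)^m"
    by (rule sum_avoiding_powr_end_le[OF t0 h])
  finally show ?thesis by simp
qed

lemma card_avoiding_ge:
  fixes h :: int
  assumes h: "h \<ge> 1"
  shows "real (card {\<eta>\<in>paths h m. H m \<eta> = 0}) \<ge> 2^m / (h + m)"
proof -
  let ?P = "paths h m"
  have fin: "finite ?P" using finite_paths h by simp
  have "real_of_int h * 2^m = (\<Sum>\<eta>\<in>?P. if H m \<eta> = 0 then real_of_int (\<eta> m) else 0)" using sum_avoiding_end[OF h] by simp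
  also have "\<dots> \<le> (\<Sum>\<eta>\<in>?P. if H m \<eta> = 0 then real_of_int h + real m else 0)"
  proof (rule sum_mono)
    fix \<eta> assume "\<eta> \<in> ?P"
    then have "\<eta> m \<le> h + int m" by (rule paths_le) simp
    then have "real_of_int (\<eta> m) \<le> real_of_int (h + int m)" by (simp only: of_int_le_iff)
    then have "real_of_int (\<eta> m) \<le> real_of_int h + real m" by simp
    then show "(if H m \<eta> = 0 then real_of_int (\<eta> m) else 0) \<le> (if H m \<eta> = 0 then real_of_int h + real m else 0)"
      by simp
  qed
  also have "\<dots> = (real_of_int h + real m) * card {\<eta>\<in>?P. H m \<eta> = 0}"
    using fin by (simp add: sum.If_cases Int_def)
  finally have a: "real_of_int h * 2^m \<le> (real_of_int h + real m) * card {\<eta>\<in>?P. H m \<eta> = 0}" .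
  have "2^m \<le> (real_of_int h) * 2^m" using h by simp
  then have "2^m \<le> (real_of_int h + real m) * card {\<eta>\<in>?P. H m \<eta> = 0}" using a by linarith
  moreover have "real_of_int h + real m > 0" using h by simp
  ultimately show ?thesis by (subst divide_le_eq) (simp add: mult.commute)
qed

lemma hitting_weight_states_ge:
  fixes a lam r t :: real and m :: nat and h :: int
  defines "h \<equiv> even_ceil (a * real (2*m))"
  assumes m: "m \<ge> 1" and h: "h \<ge> 1" and lam: "lam > 1" and r: "r = 1 / sqrt (lam - 1)"
    and r1: "r \<le> 1" and t: "t \<ge> r"
    and R: "t powr h * (t + 1/t)^m \<le> (1/2) * ((r + 1/r)^m * r powr h)"
  shows "(((r + 1/r)^m * r powr h) / 2)^2 / (lam * (h + m + 1))
    \<le> (\<Sum>\<eta>\<in>{\<eta>\<in>states a (2*m). H (2*m) \<eta> > 0}. lam ^ H (2*m) \<eta>)"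
proof -
  have r0: "r > 0" using r lam by simp
  have U0: "((r + 1/r)^m * r powr h) / 2 \<ge> 0" using r0 by (simp add: add_pos_pos)
  have "((r + 1/r)^m * r powr h) / 2 \<le> (\<Sum>\<eta>\<in>{\<eta>\<in>paths h m. H m \<eta> > 0}. lam ^ H m \<eta>)"
    using hitting_weight_ge[OF h lam r r1 t, of m] R by linarith
  then have "(((r + 1/r)^m * r powr h) / 2)^2 / (lam * (h + m + 1))
      \<le> (\<Sum>\<eta>\<in>{\<eta>\<in>paths h m. H m \<eta> > 0}. lam ^ H m \<eta>)^2 / (lam * (h + m + 1))"
    using U0 lam h by (intro divide_right_mono power_mono) auto
  also have "\<dots> \<le> (\<Sum>\<eta>\<in>{\<eta>\<in>paths h (2*m). \<eta> (2*m) = h \<and> H (2*m) \<eta> > 0}. lam ^ H (2*m) \<eta>)"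
    by (rule hitting_weight_square_le) (use lam h m in auto)
  also have "\<dots> = (\<Sum>\<eta>\<in>{\<eta>\<in>states a (2*m). H (2*m) \<eta> > 0}. lam ^ H (2*m) \<eta>)"
    unfolding states_eq_paths h_def by (rule sum.cong) auto
  finally show ?thesis .
qed

lemma avoiding_card_states_ge:
  fixes a :: real and m :: nat and h :: int
  defines "h \<equiv> even_ceil (a * real (2*m))"
  assumes m: "m \<ge> 1" and h: "h \<ge> 1"
  shows "(2^m / (h + m))^2 / (h + m + 1) \<le> card {\<eta>\<in>states a (2*m). H (2*m) \<eta> = 0}"
proof -
  have "(2^m / (h + m))^2 / (h + m + 1) \<le> (real (card {\<eta>\<in>paths h m. H m \<eta> = 0}))^2 / (h + m + 1)"
    using card_avoiding_ge[OF h, of m] h by (intro divide_right_mono power_mono) auto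
  also have "\<dots> \<le> card {\<eta>\<in>paths h (2*m). \<eta> (2*m) = h \<and> H (2*m) \<eta> = 0}"
    by (rule avoiding_card_square_le[OF h m])
  also have "{\<eta>\<in>paths h (2*m). \<eta> (2*m) = h \<and> H (2*m) \<eta> = 0} = {\<eta>\<in>states a (2*m). H (2*m) \<eta> = 0}"
    unfolding states_eq_paths h_def by auto
  finally show ?thesis .
qed

lemma Trel_ge_explicit:
  fixes a lam r t \<sigma> :: real and m :: nat and h :: int
  defines "h \<equiv> even_ceil (a * real (2*m))"
  assumes m: "m \<ge> 1" and h: "h \<ge> 1" and lam: "lam > 1" and r: "r = 1 / sqrt (lam - 1)" and r1: "r \<le> 1"
    and t: "t \<ge> r" and s: "\<sigma> \<ge> 1"
    and R: "t powr h * (t + 1/t)^m \<le> (1/2) * ((r + 1/r)^m * r powr h)"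
  shows "Trel lam a (2*m) \<ge> min ((((r + 1/r)^m * r powr h) / 2)^2 / (lam * (h + m + 1))) ((2^m / (h + m))^2 / (h + m + 1))
            / (2 * (real (2*m) * lam * (real (2*m+1) * ((\<sigma> + 1/\<sigma>)^(2*m) / \<sigma> powr (2*(h-1))))))"
proof -
  let ?N = "2*m"
  define ZA where "ZA = (\<Sum>\<eta>\<in>{\<eta>\<in>states a ?N. H ?N \<eta> > 0}. lam ^ H ?N \<eta>)"
  define ZB where "ZB = real (card {\<eta>\<in>states a ?N. H ?N \<eta> = 0})"
  define Mc where "Mc = real (card {\<eta>\<in>states a ?N. \<exists>t\<le>?N. \<eta> t \<le> 1})"
  define Alb where "Alb = (((r + 1/r)^m * r powr h) / 2)^2 / (lam * (h + m + 1))"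
  define Blb where "Blb = (2^m / (h + m))^2 / (h + m + 1)"
  define Mub where "Mub = real (?N+1) * ((\<sigma> + 1/\<sigma>)^?N / \<sigma> powr (2*(h-1)))"
  have r0: "r > 0" using r lam by simp
  have "r + 1/r > 0" using r0 by (simp add: add_pos_pos)
  then have "(r + 1/r)^m * r powr h / 2 > 0" using r0 by simp
  then have Alb: "Alb > 0" unfolding Alb_def using lam h by (intro divide_pos_pos zero_less_power) auto
  have Blb: "Blb > 0" unfolding Blb_def using h by simp
  have ZA: "Alb \<le> ZA"
    unfolding Alb_def ZA_def h_def by (rule hitting_weight_states_ge[OF m _ lam r r1 t R[unfolded h_def]]) (use h h_def in simp)
  have ZB: "Blb \<le> ZB"
    unfolding Blb_def ZB_def h_def by (rule avoiding_card_states_ge[OF m]) (use h h_def in simp)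
  have "{\<eta>\<in>states a ?N. \<exists>t\<le>?N. \<eta> t \<le> 1} = {\<eta>\<in>paths h ?N. \<eta> ?N = h \<and> (\<exists>t\<le>?N. \<eta> t \<le> 1)}"
    unfolding states_eq_paths h_def by auto
  then have "Mc \<le> Mub" unfolding Mc_def Mub_def using card_bridges_low_le[OF s, of h ?N] h by simp
  have hh: "even_ceil (a * real ?N) \<ge> 0" using h unfolding h_def by simp
  have Mc: "Mc > 0" and TL: "Trel lam a ?N \<ge> min ZA ZB / (2 * (real ?N * lam * Mc))"
    using Trel_ge_partition_bound[OF hh _ _ lam] ZA ZB Alb Blb m unfolding ZA_def ZB_def Mc_def by auto
  have "min Alb Blb / (2 * (real ?N * lam * Mub)) \<le> min ZA ZB / (2 * (real ?N * lam * Mc))"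
  proof (rule frac_le)
    show "0 \<le> min ZA ZB" "min Alb Blb \<le> min ZA ZB" using ZA ZB Alb Blb by auto
    show "0 < 2 * (real ?N * lam * Mc)" using Mc lam m by simp
    show "2 * (real ?N * lam * Mc) \<le> 2 * (real ?N * lam * Mub)"
      using \<open>Mc \<le> Mub\<close> lam by (intro mult_left_mono) auto
  qed
  then show ?thesis using TL unfolding Alb_def Blb_def Mub_def by simp
qed

lemma ln_eigenvalue_eq:
  fixes lam a :: real
  assumes lam: "lam > 2" 
  defines "r \<equiv> 1 / sqrt (lam - 1)"
  shows "ln (r + 1/r) + 2*a * ln r = ln 2 + Ffree_excess a lam"
proof -
  let ?s = "sqrt (lam - 1)"
  have s: "?s > 0" using lam by simp
  have ss: "?s * ?s = lam - 1" using lam by simp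
  have "r + 1/r = lam / ?s" unfolding r_def using s ss by (simp add: field_simps)
  then have "ln (r + 1/r) = ln lam - ln ?s" using s lam by (simp add: ln_div)
  moreover have "ln ?s = ln (lam - 1) / 2" using lam by (simp add: ln_sqrt)
  moreover have "ln r = - ln ?s" unfolding r_def using s by (simp add: ln_div)
  ultimately show ?thesis unfolding Ffree_excess_def by (simp add: algebra_simps)
qed

lemma ln_tilt_eigenvalue_eq:
  fixes a :: real
  assumes a: "0 < a" "a < 1/2"
  defines "\<sigma> \<equiv> sqrt ((1 + 2*a) / (1 - 2*a))"
  shows "ln (\<sigma> + 1/\<sigma>) - 2*a * ln \<sigma> = ln 2 - q (2*a)"
proof -
  have p: "1 + 2*a > 0" "1 - 2*a > 0" using a by auto
  have s: "\<sigma> > 0" unfolding \<sigma>_def using p by simp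
  have ss: "\<sigma> * \<sigma> = (1 + 2*a) / (1 - 2*a)" unfolding \<sigma>_def using p by simp
  have "\<sigma> + 1/\<sigma> = (\<sigma> * \<sigma> + 1) / \<sigma>" using s by (simp add: field_simps)
  also have "\<sigma> * \<sigma> + 1 = 2 / (1 - 2*a)" unfolding ss using p by (simp add: field_simps)
  finally have e: "\<sigma> + 1/\<sigma> = 2 / (1 - 2*a) / \<sigma>" .
  have l1: "ln (\<sigma> + 1/\<sigma>) = ln 2 - ln (1 - 2*a) - ln \<sigma>" unfolding e using p s by (simp add: ln_div ln_mult)
  have l2: "ln \<sigma> = (ln (1 + 2*a) - ln (1 - 2*a)) / 2" unfolding \<sigma>_def using p by (simp add: ln_sqrt ln_div)
  show ?thesis unfolding l1 q_def l2 by (simp add: algebra_simps) (simp add: field_simps)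
qed

lemma tilt_exponent_deriv_eq:
  assumes r0: "(r::real) > 0"
  shows "2*a * (1/r) + (1 - 1/r^2) / (r + 1/r) = (2*a*(r^2+1) + r^2 - 1) / (r * (r^2 + 1))"
proof -
  have p: "r^2 + 1 > 0" by (simp add: add_nonneg_pos)
  have q: "r*r > 0" "r*(r*r) > 0" "r*(r*(r*r)) > 0" using r0 by simp_all
  have d: "r * r + r * (r * (r * r)) \<noteq> 0" "r + r * (r * r) \<noteq> 0" using q r0 by linarith+
  have e1: "(1 - 1/r^2)/(r + 1/r) = (r^2 - 1)/(r*(r^2+1))"
  proof -
    have "r + 1/r = (r^2+1)/r" using r0 by (simp add: field_simps power2_eq_square)
    moreover have "1 - 1/r^2 = (r^2 - 1)/r^2" using r0 by (simp add: field_simps)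
    ultimately have "(1 - 1/r^2)/(r + 1/r) = ((r^2 - 1)/r^2) / ((r^2+1)/r)" by simp
    also have "\<dots> = (r^2 - 1)/(r*(r^2+1))" using r0 p d by (simp add: field_simps power2_eq_square)
    finally show ?thesis .
  qed
  have e2: "2*a*(1/r) = 2*a*(r^2+1)/(r*(r^2+1))" using r0 p by simp
  show ?thesis unfolding e1 e2 by (simp add: add_divide_distrib[symmetric] algebra_simps)
qed

text \<open>The hypothesis on \<open>lam\<close> is exactly what makes \<open>x \<mapsto> 2 a ln x + ln (x + 1/x)\<close> decrease at
  \<open>x = r\<close>: tilting the avoiding paths slightly above \<open>r\<close> gains an exponential factor.\<close>

lemma exists_better_tilt:
  fixes a lam :: real
  assumes a: "0 < a" "a < 1/2" and lam: "lam > 2 / (1 - 2*a)"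
  defines "r \<equiv> 1 / sqrt (lam - 1)"
  shows "\<exists>t>r. 2*a * (ln t - ln r) + ln (t + 1/t) < ln (r + 1/r)"
proof -
  have p: "1 - 2*a > 0" using a by simp
  have "2 \<le> 2 / (1 - 2*a)" using p a by (simp add: le_divide_eq)
  then have lam2: "lam > 2" using lam by linarith
  have r0: "r > 0" unfolding r_def using lam2 by simp
  have rr: "r^2 = 1 / (lam - 1)" unfolding r_def using lam2 by (simp add: power_divide)
  have "2 < (1 - 2*a) * lam" using lam p by (simp add: field_simps)
  then have "1 + 2*a < (1 - 2*a) * (lam - 1)" by (simp add: algebra_simps)
  then have key: "r^2 * (1 + 2*a) < 1 - 2*a" unfolding rr using lam2 by (simp add: field_simps)
  define G where "G x = 2*a * (ln x - ln r) + ln (x + 1/x)" for x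
  define D where "D = 2*a * (1/r) + (1 - 1/r^2) / (r + 1/r)"
  have rp: "0 < 1 + r * r" using r0 by (simp add: add_pos_nonneg)
  have dG: "DERIV G r :> D" unfolding G_def D_def using r0 rp
    by (auto intro!: derivative_eq_intros simp: power2_eq_square field_simps)
  have "D = (2*a*(r^2+1) + r^2 - 1) / (r * (r^2 + 1))" unfolding D_def by (rule tilt_exponent_deriv_eq[OF r0])
  moreover have "2*a*(r^2+1) + r^2 - 1 < 0" using key by (simp add: algebra_simps)
  moreover have "r * (r^2 + 1) > 0" using r0 by (simp add: add_nonneg_pos)
  ultimately have Dn: "D < 0" by (simp add: divide_neg_pos)
  obtain d where d: "d > 0" "\<forall>h>0. h < d \<longrightarrow> G r > G (r + h)" using DERIV_neg_dec_right[OF dG Dn] by blast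
  have "G r > G (r + d/2)" using d by simp
  moreover have "G r = ln (r + 1/r)" unfolding G_def by simp
  ultimately show ?thesis unfolding G_def using d by (intro exI[of _ "r + d/2"]) auto
qed

lemma ln_ge_min_div:
  fixes T A B D :: real
  assumes "T \<ge> min A B / D" "A > 0" "B > 0" "D > 0"
  shows "ln T \<ge> min (ln A) (ln B) - ln D"
proof -
  have "min A B / D > 0" using assms by simp
  then have "ln T \<ge> ln (min A B / D)" using assms(1) by simp
  also have "ln (min A B / D) = min (ln A) (ln B) - ln D" using assms(2-4) by (simp add: ln_div min_def)
  finally show ?thesis .
qed

lemma ln_Trel_ge:
  fixes T lam r \<sigma> a :: real and m :: nat and h :: int
  assumes m: "m \<ge> 1" and a: "0 < a" "a < 1/2" and lam: "lam > 1" and r: "0 < r" "r \<le> 1" and s: "\<sigma> \<ge> 1"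
    and hb1: "2*a*m \<le> h" and hb2: "h \<le> 2*a*m + 2" and h1: "h \<ge> 1"
    and T: "T \<ge> min (((r + 1/r)^m * r powr h / 2)^2 / (lam * (h + m + 1))) ((2^m / (h + m))^2 / (h + m + 1))
            / (2 * (real (2*m) * lam * (real (2*m+1) * ((\<sigma> + 1/\<sigma>)^(2*m) / \<sigma> powr (2*(h-1))))))"
  shows "ln T \<ge> 2*m*(min (ln (r + 1/r) + 2*a*ln r) (ln 2) - (ln (\<sigma> + 1/\<sigma>) - 2*a*ln \<sigma>))
          + min (4*ln r - 2*ln 2 - ln lam) 0 - (ln 2 + ln lam + 2*ln \<sigma>) - 5*ln (3*m+3)"
proof -
  define c where "c = r + 1/r"
  define L where "L = ln (3*real m+3)"
  define Al where "Al = (c^m * r powr h / 2)^2 / (lam * (h + m + 1))"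
  define Bl where "Bl = (2^m / (h + m))^2 / (h + m + 1)"
  define Den where "Den = 2 * (real (2*m) * lam * (real (2*m+1) * ((\<sigma> + 1/\<sigma>)^(2*m) / \<sigma> powr (2*(h-1)))))"
  have c0: "c > 0" unfolding c_def using r by (simp add: add_pos_pos)
  have hm: "real_of_int h + real m + 1 \<le> 3*real m + 3" "real_of_int h + real m \<le> 3*real m+3" "real_of_int h + real m > 0"
  proof -
    have "2*a*real m \<le> 1 * real m" using a by (intro mult_right_mono) auto
    then show "real_of_int h + real m + 1 \<le> 3*real m + 3" "real_of_int h + real m \<le> 3*real m+3" "real_of_int h + real m > 0"
      using hb2 h1 by linarith+
  qed
  have l4: "ln (4::real) = 2 * ln 2" using ln_realpow[of "2::real" 2] by simp
  have L0: "L \<ge> 0" unfolding L_def by simp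
  have Al0: "Al > 0" unfolding Al_def using c0 r lam hm by (intro divide_pos_pos) auto
  have Bl0: "Bl > 0" unfolding Bl_def using hm by simp
  have sp: "\<sigma> + 1/\<sigma> > 0" using s by (simp add: add_pos_pos)
  have Den0: "Den > 0" unfolding Den_def using lam m s sp by simp
  have "T \<ge> min Al Bl / Den" using T unfolding Al_def Bl_def Den_def c_def .
  then have lnT: "ln T \<ge> min (ln Al) (ln Bl) - ln Den" using Al0 Bl0 Den0 by (rule ln_ge_min_div)
  have lnAl: "ln Al = 2 * (m * ln c + h * ln r - ln 2) - (ln lam + ln (h + m + 1))"
    unfolding Al_def using c0 r lam hm by (simp add: ln_div ln_mult_pos ln_realpow)
  have "(2*a*m + 2 - h) * ln r \<le> 0" using hb2 r by (intro mult_nonneg_nonpos) auto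
  then have hr: "h * ln r \<ge> (2*a*m + 2) * ln r" by (simp add: algebra_simps)
  have "ln (h + m + 1) \<le> L" unfolding L_def using hm by simp
  then have A: "ln Al \<ge> 2*m*(ln c + 2*a*ln r) + (4*ln r - 2*ln 2 - ln lam) - L"
    using lnAl hr by (simp add: algebra_simps)
  have lnBl: "ln Bl = 2 * (m * ln 2 - ln (h + m)) - ln (h + m + 1)"
    unfolding Bl_def using hm by (simp add: ln_div ln_realpow)
  have "ln (h + m) \<le> L" "ln (h + m + 1) \<le> L" unfolding L_def using hm by auto
  then have B: "ln Bl \<ge> 2*m*ln 2 - 3*L" using lnBl by simp
  have lnDen: "ln Den = ln 2 + ln (2*m) + ln lam + ln (2*m+1) + 2*m*ln (\<sigma> + 1/\<sigma>) - 2*(h-1)*ln \<sigma>"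
    unfolding Den_def using lam m s sp by (simp add: ln_div ln_mult_pos ln_realpow l4)
  have "ln (2*real m) \<le> L" "ln (2*real m+1) \<le> L" unfolding L_def using m by auto
  moreover have "2*(h-1)*ln \<sigma> \<ge> (4*a*m - 2) * ln \<sigma>" using hb1 s by (intro mult_right_mono) auto
  ultimately have D: "ln Den \<le> 2*m*(ln (\<sigma> + 1/\<sigma>) - 2*a*ln \<sigma>) + (ln 2 + ln lam + 2*ln \<sigma>) + 2*L"
    using lnDen by (simp add: algebra_simps)
  define A1 where "A1 = ln c + 2*a*ln r"
  have m1: "2*m*min A1 (ln 2) \<le> 2*m*A1" "2*m*min A1 (ln 2) \<le> 2*m*ln 2" by (intro mult_left_mono; simp)+
  have "min (ln Al) (ln Bl) \<ge> 2*m*min A1 (ln 2) + min (4*ln r - 2*ln 2 - ln lam) 0 - 3*L"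
    using A B m1 L0 unfolding A1_def by (simp add: min_def)
  then have "ln T \<ge> 2*m*min A1 (ln 2) + min (4*ln r - 2*ln 2 - ln lam) 0 - 3*L - (2*m*(ln (\<sigma> + 1/\<sigma>) - 2*a*ln \<sigma>) + (ln 2 + ln lam + 2*ln \<sigma>) + 2*L)"
    using lnT D by linarith
  moreover have "L = ln (3*real m+3)" unfolding L_def ..
  ultimately show ?thesis unfolding A1_def c_def by (simp add: algebra_simps)
qed

lemma even_ceil_bounds:
  fixes a :: real and m :: nat
  assumes a: "a > 0" and m: "m \<ge> 1"
  shows "2*a*m \<le> real_of_int (even_ceil (a * real (2*m)))"
    "real_of_int (even_ceil (a * real (2*m))) \<le> 2*a*m + 2"
    "even_ceil (a * real (2*m)) \<ge> 1"
proof -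
  have e: "even_ceil (a * real (2*m)) = 2 * \<lceil>a * real m\<rceil>" unfolding even_ceil_def by simp
  have c: "of_int \<lceil>a * real m\<rceil> - 1 < a * real m" "a * real m \<le> of_int \<lceil>a * real m\<rceil>" using ceiling_correct by auto
  show "2*a*m \<le> real_of_int (even_ceil (a * real (2*m)))" unfolding e using c by simp
  show "real_of_int (even_ceil (a * real (2*m))) \<le> 2*a*m + 2" unfolding e using c by simp
  have "a * real m > 0" using a m by simp
  then have "real_of_int \<lceil>a * real m\<rceil> > 0" using c by linarith
  then have "\<lceil>a * real m\<rceil> > 0" by simp
  then have "\<lceil>a * real m\<rceil> \<ge> 1" by simp
  then show "even_ceil (a * real (2*m)) \<ge> 1" unfolding e by linarith
qed

lemma avoiding_bound_small:
  fixes t r \<rho> \<theta> c a :: real and m :: nat and h :: int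
  assumes r: "r > 0" and t: "t > r" and \<rho>: "\<rho> = t / r" and c: "c > 0"
    and \<theta>: "\<theta> = \<rho> powr (2*a) * (t + 1/t) / c" and hb: "real_of_int h \<le> 2*a*m + 2"
    and small: "\<rho>^2 * \<theta>^m \<le> 1/2"
  shows "t powr h * (t + 1/t)^m \<le> (1/2) * (c^m * r powr h)"
proof -
  have \<rho>1: "\<rho> > 1" using \<rho> r t by simp
  have t0: "t > 0" using r t by simp
  have tt: "t = \<rho> * r" using \<rho> r by simp
  have p0: "\<rho> powr (2*a) > 0" using \<rho>1 by simp
  have e1: "t powr h = \<rho> powr h * r powr h"
  proof -
    have "t powr h = (\<rho> * r) powr h" using tt by simp
    also have "\<dots> = \<rho> powr h * r powr h" using \<rho>1 r by (simp add: powr_mult)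
    finally show ?thesis .
  qed
  have e2: "\<rho> powr h \<le> \<rho> powr (2*a*m + 2)" by (rule powr_mono[OF hb]) (use \<rho>1 in simp)
  have e3: "\<rho> powr (2*a*m + 2) = \<rho>^2 * (\<rho> powr (2*a))^m"
  proof -
    have x1: "\<rho> powr (2*a*m + 2) = \<rho> powr (2*a*m) * \<rho> powr 2" by (rule powr_add)
    have x2: "\<rho> powr 2 = \<rho>^2" using \<rho>1 powr_realpow[of \<rho> 2] by simp
    have x3: "\<rho> powr (2*a*m) = (\<rho> powr (2*a)) powr (real m)" by (simp add: powr_powr)
    have x4: "(\<rho> powr (2*a)) powr (real m) = (\<rho> powr (2*a))^m" by (rule powr_realpow[OF p0])
    show ?thesis unfolding x1 x2 x3 x4 by simp
  qed
  have rh: "r powr h > 0" using r by simp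
  have tp: "t powr h \<le> \<rho>^2 * (\<rho> powr (2*a))^m * r powr h"
  proof -
    have "\<rho> powr h * r powr h \<le> \<rho> powr (2*a*m + 2) * r powr h" by (rule mult_right_mono[OF e2]) (use rh in simp)
    then show ?thesis unfolding e1 e3 .
  qed
  have tq: "(t + 1/t) = \<theta> * c / \<rho> powr (2*a)" unfolding \<theta> using p0 c by simp
  have pos: "(t + 1/t)^m \<ge> 0" using t0 by simp
  have "t powr h * (t + 1/t)^m \<le> \<rho>^2 * (\<rho> powr (2*a))^m * r powr h * (t + 1/t)^m"
    by (rule mult_right_mono[OF tp pos])
  also have "\<rho>^2 * (\<rho> powr (2*a))^m * r powr h * (t + 1/t)^m = (\<rho>^2 * \<theta>^m) * (c^m * r powr h)"
  proof -
    have "(t + 1/t)^m = \<theta>^m * c^m / (\<rho> powr (2*a))^m" unfolding tq by (simp add: power_divide power_mult_distrib)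
    moreover have "(\<rho> powr (2*a))^m > 0" using p0 by simp
    ultimately show ?thesis by simp
  qed
  also have "\<dots> \<le> (1/2) * (c^m * r powr h)" using small r c by (intro mult_right_mono) auto
  finally show ?thesis .
qed

text \<open>The exponential gain of \<open>exists_better_tilt\<close> beats the bounded loss from rounding \<open>h\<close>, so the
  contribution of paths avoiding 0 is eventually at most half the total weight.\<close>

lemma avoiding_eventually_small:
  fixes a lam :: real
  assumes a: "0 < a" "a < 1/2" and lam: "lam > 2 / (1 - 2*a)"
  defines "r \<equiv> 1 / sqrt (lam - 1)"
  obtains t where "t > r" "eventually (\<lambda>m. \<forall>h::int. real_of_int h \<le> 2*a*m + 2 \<longrightarrow>
      t powr h * (t + 1/t)^m \<le> (1/2) * ((r + 1/r)^m * r powr h)) sequentially"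
proof -
  have "2 \<le> 2 / (1 - 2*a)" using a by (simp add: le_divide_eq)
  then have r0: "r > 0" unfolding r_def using lam by simp
  obtain t where t: "t > r" and gain: "2*a * (ln t - ln r) + ln (t + 1/t) < ln (r + 1/r)"
    using exists_better_tilt[OF a lam] unfolding r_def by blast
  define c where "c = r + 1/r"
  define \<rho> where "\<rho> = t / r"
  define \<theta> where "\<theta> = \<rho> powr (2*a) * (t + 1/t) / c"
  have t0: "t > 0" and c0: "c > 0" and \<rho>1: "\<rho> > 1" and tp: "t + 1/t > 0"
    using t r0 unfolding c_def \<rho>_def by (auto simp: add_pos_pos)
  have \<theta>0: "\<theta> > 0" unfolding \<theta>_def using \<rho>1 tp c0 by simp
  have "ln \<theta> = 2*a * (ln t - ln r) + ln (t + 1/t) - ln c"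
    unfolding \<theta>_def \<rho>_def using t0 r0 tp c0 by (simp add: ln_div ln_mult_pos)
  then have "ln \<theta> < 0" using gain unfolding c_def by simp
  then have \<theta>1: "\<theta> < 1" using \<theta>0 by simp
  have "(\<lambda>m. \<rho>^2 * \<theta>^m) \<longlonglongrightarrow> \<rho>^2 * 0"
    by (intro tendsto_mult_left LIMSEQ_power_zero) (use \<theta>0 \<theta>1 in simp)
  then have "eventually (\<lambda>m. \<rho>^2 * \<theta>^m < 1/2) sequentially" by (intro order_tendstoD(2)) auto
  then have "eventually (\<lambda>m. \<forall>h::int. real_of_int h \<le> 2*a*m + 2 \<longrightarrow>
      t powr h * (t + 1/t)^m \<le> (1/2) * ((r + 1/r)^m * r powr h)) sequentially"
    by eventually_elim (use avoiding_bound_small[OF r0 t \<rho>_def c0 \<theta>_def] in \<open>auto simp: c_def\<close>)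
  with t show thesis by (rule that)
qed

lemma ln_Trel_ge_linear:
  fixes a lam :: real
  assumes a: "0 < a" "a < 1/2" and lam: "lam > 2 / (1 - 2*a)"
  obtains K where "eventually (\<lambda>m. ln (Trel lam a (2*m)) \<ge>
      2 * real m * (min (Ffree_excess a lam) 0 + q (2*a)) + K - 5 * ln (3 * real m + 3)) sequentially"
proof -
  have "2 \<le> 2 / (1 - 2*a)" using a by (simp add: le_divide_eq)
  then have lam2: "lam > 2" using lam by linarith
  define r where "r = 1 / sqrt (lam - 1)"
  have r0: "r > 0" "r \<le> 1" unfolding r_def using lam2 by auto
  define \<sigma> where "\<sigma> = sqrt ((1 + 2*a) / (1 - 2*a))"
  have "(1 + 2*a) / (1 - 2*a) \<ge> 1" using a by (simp add: le_divide_eq)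
  then have \<sigma>1: "\<sigma> \<ge> 1" unfolding \<sigma>_def by simp
  obtain t where t: "t > r" and small: "eventually (\<lambda>m. \<forall>h::int. real_of_int h \<le> 2*a*m + 2 \<longrightarrow>
      t powr h * (t + 1/t)^m \<le> (1/2) * ((r + 1/r)^m * r powr h)) sequentially"
    using avoiding_eventually_small[OF a lam] unfolding r_def by blast
  define E where "E = min (ln (r + 1/r) + 2*a*ln r) (ln 2) - (ln (\<sigma> + 1/\<sigma>) - 2*a*ln \<sigma>)"
  define K where "K = min (4*ln r - 2*ln 2 - ln lam) 0 - (ln 2 + ln lam + 2*ln \<sigma>)"
  have E: "E = min (Ffree_excess a lam) 0 + q (2*a)"
    unfolding E_def using ln_eigenvalue_eq[OF lam2, of a] ln_tilt_eigenvalue_eq[OF a]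
    unfolding r_def \<sigma>_def by (simp add: min_def)
  have "eventually (\<lambda>m. ln (Trel lam a (2*m)) \<ge> 2 * real m * E + K - 5 * ln (3 * real m + 3)) sequentially"
    using small eventually_ge_at_top[of "1::nat"]
  proof eventually_elim
    case (elim m)
    define h where "h = even_ceil (a * real (2*m))"
    have hb: "2*a*m \<le> real_of_int h" "real_of_int h \<le> 2*a*m + 2" "h \<ge> 1"
      using even_ceil_bounds[OF a(1) elim(2)] unfolding h_def by auto
    have R: "t powr h * (t + 1/t)^m \<le> (1/2) * ((r + 1/r)^m * r powr h)" using elim(1) hb(2) by blast
    have "Trel lam a (2*m) \<ge> min ((((r + 1/r)^m * r powr h) / 2)^2 / (lam * (h + m + 1)))
        ((2^m / (h + m))^2 / (h + m + 1))
        / (2 * (real (2*m) * lam * (real (2*m+1) * ((\<sigma> + 1/\<sigma>)^(2*m) / \<sigma> powr (2*(h-1))))))"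
      unfolding h_def
      by (rule Trel_ge_explicit[OF elim(2) _ _ r_def r0(2) _ \<sigma>1 R[unfolded h_def]])
        (use hb(3) lam2 t in \<open>auto simp: h_def\<close>)
    from ln_Trel_ge[OF elim(2) a _ r0 \<sigma>1 hb this] lam2 show ?case
      unfolding E_def K_def by (simp add: algebra_simps)
  qed
  with E show thesis by (intro that) simp
qed

lemma Liminf_ge_linear_rate:
  fixes x :: "nat \<Rightarrow> real"
  assumes "eventually (\<lambda>m. x m \<ge> 2 * real m * E + K - 5 * ln (3 * real m + 3)) sequentially"
  shows "Liminf sequentially (\<lambda>m. ereal (x m / real (2*m))) \<ge> ereal E"
proof -
  define Z where "Z m = E + ((K - 5 * ln 6) / 2) / real m - (5/2) * (ln (real m) / real m)" for m :: nat
  have Zlim: "Z \<longlonglongrightarrow> E + 0 - (5/2) * 0"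
    unfolding Z_def by (intro tendsto_intros lim_const_over_n lim_ln_over_n)
  have XZ: "eventually (\<lambda>m. x m / real (2*m) \<ge> Z m) sequentially"
    using assms eventually_ge_at_top[of "1::nat"]
  proof eventually_elim
    case (elim m)
    have m0: "real m > 0" using elim by simp
    have "ln (3 * real m + 3) \<le> ln (6 * real m)" using elim by simp
    also have "\<dots> = ln 6 + ln (real m)" using m0 by (simp add: ln_mult_pos)
    finally have "ln (3 * real m + 3) \<le> ln 6 + ln (real m)" .
    then have "2 * real m * E + K - 5 * ln 6 - 5 * ln (real m) \<le> x m" using elim(1) by simp
    then have "(2 * real m * E + K - 5 * ln 6 - 5 * ln (real m)) / (2 * real m) \<le> x m / (2 * real m)"
      using m0 by (intro divide_right_mono) auto
    moreover have "Z m = (2 * real m * E + K - 5 * ln 6 - 5 * ln (real m)) / (2 * real m)"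
      unfolding Z_def using m0 by (simp add: field_simps)
    ultimately show ?case by simp
  qed
  show ?thesis
  proof (subst le_Liminf_iff, intro allI impI)
    fix y assume y: "y < ereal E"
    show "eventually (\<lambda>m. y < ereal (x m / real (2*m))) sequentially"
    proof (cases y)
      case (real y0)
      then have "eventually (\<lambda>m. y0 < Z m) sequentially" using Zlim y by (intro order_tendstoD(1)) auto
      then show ?thesis using XZ by eventually_elim (use real in auto)
    qed (use y in auto)
  qed
qed

theorem proposition4p1:
  fixes a lam :: real
  assumes "0 < a" and "a < 1/2" and "lam > 2 / (1 - 2 * a)"
  shows "Liminf sequentially
           (\<lambda>n. ereal (ln (Trel lam a (2 * n)) / real (2 * n))) \<ge> ereal (E_rate a lam)"
proof -
  obtain K where "eventually (\<lambda>m. ln (Trel lam a (2*m)) \<ge>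
      2 * real m * (min (Ffree_excess a lam) 0 + q (2*a)) + K - 5 * ln (3 * real m + 3)) sequentially"
    using ln_Trel_ge_linear assms by blast
  then have "Liminf sequentially (\<lambda>n. ereal (ln (Trel lam a (2 * n)) / real (2 * n)))
      \<ge> ereal (min (Ffree_excess a lam) 0 + q (2*a))"
    by (rule Liminf_ge_linear_rate)
  moreover have "E_rate a lam \<le> min (Ffree_excess a lam) 0 + q (2*a)"
    using E_rate_le assms unfolding lambda_min_def by simp
  ultimately show ?thesis by (meson ereal_less_eq(3) order_trans)
qed

end
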